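(* Let $\Omega\subset\mathbb{R}^2$ be a Jordan domain with analytic boundary, let $f^{(0)}$ be a harmonic function in $\Omega$ extending to a real analytic function in $\overline\Omega$ with nonvanishing Hessian on $\overline\Omega$ (including $\partial\Omega$), and let $\varepsilon>0$. Then there is at most one real analytic family $f\colon\overline\Omega\times[-\varepsilon;\varepsilon]\to\mathbb{R}$ satisfying $f_{xx}+f_{yy}=t\sqrt{(f_{xy})^2-f_{xx}f_{yy}}$ and such that $f(x,y,t)=f^{(0)}(x,y)$ whenever $t=0$ or $(x,y)\in\partial\Omega$.
   Context: A Jordan domain with analytic boundary is a domain bounded by the image of a periodic injective real analytic map $\mathbb{R}\to\mathbb{R}^2$ with nowhere vanishing derivative. A real analytic family is a map $\overline\Omega\times[-\varepsilon;\varepsilon]\to\mathbb{R}$ extending to a real analytic function on a neighborhood of $\overline\Omega\times[-\varepsilon;\varepsilon]$. A function on $\overline\Omega$ is real analytic in the closed domain if it extends real analytically to a neighborhood of $\overline\Omega$. *)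

theory Defs
  imports "HOL-Analysis.Analysis"
begin

text \<open>Real analyticity, defined via locally convergent power series
  (unconditional summation of real series = absolute convergence).\<close>

definition real_analytic1_on :: "real set \<Rightarrow> (real \<Rightarrow> real) \<Rightarrow> bool" where
  "real_analytic1_on U g \<longleftrightarrow> open U \<and>
     (\<forall>a\<in>U. \<exists>r>0. \<exists>c :: nat \<Rightarrow> real. ball a r \<subseteq> U \<and>
        (\<forall>x\<in>ball a r. ((\<lambda>i. c i * (x - a) ^ i) has_sum g x) UNIV))"

definition real_analytic2_on :: "(real \<times> real) set \<Rightarrow> (real \<times> real \<Rightarrow> real) \<Rightarrow> bool" where
  "real_analytic2_on U g \<longleftrightarrow> open U \<and>
     (\<forall>a\<in>U. \<exists>r>0. \<exists>c :: nat \<Rightarrow> nat \<Rightarrow> real. ball a r \<subseteq> U \<and>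
        (\<forall>p\<in>ball a r. ((\<lambda>(i,j). c i j * (fst p - fst a) ^ i * (snd p - snd a) ^ j)
                          has_sum g p) UNIV))"

definition real_analytic3_on ::
    "((real \<times> real) \<times> real) set \<Rightarrow> ((real \<times> real) \<times> real \<Rightarrow> real) \<Rightarrow> bool" where
  "real_analytic3_on U g \<longleftrightarrow> open U \<and>
     (\<forall>a\<in>U. \<exists>r>0. \<exists>c :: nat \<Rightarrow> nat \<Rightarrow> nat \<Rightarrow> real. ball a r \<subseteq> U \<and>
        (\<forall>p\<in>ball a r. ((\<lambda>(i,j,k). c i j k * (fst (fst p) - fst (fst a)) ^ i
                               * (snd (fst p) - snd (fst a)) ^ j * (snd p - snd a) ^ k)
                          has_sum g p) UNIV))"

definition jordan_domain_analytic :: "(real \<times> real) set \<Rightarrow> bool" where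
  "jordan_domain_analytic \<Omega> \<longleftrightarrow>
     (\<exists>\<gamma> :: real \<Rightarrow> real \<times> real. \<exists>P>0.
        (\<forall>t. \<gamma> (t + P) = \<gamma> t) \<and> inj_on \<gamma> {0..<P} \<and>
        real_analytic1_on UNIV (\<lambda>t. fst (\<gamma> t)) \<and>
        real_analytic1_on UNIV (\<lambda>t. snd (\<gamma> t)) \<and>
        (\<forall>t. \<exists>v. (\<gamma> has_vector_derivative v) (at t) \<and> v \<noteq> 0) \<and>
        \<Omega> = inside (range \<gamma>))"

text \<open>Real analytic in the closed domain: extends analytically to an open neighbourhood.
  We phrase it for a function defined everywhere which is analytic on an open
  neighbourhood of the closed set; its restriction is the function in question.\<close>

definition analytic_on_closed2 :: "(real \<times> real) set \<Rightarrow> (real \<times> real \<Rightarrow> real) \<Rightarrow> bool" where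
  "analytic_on_closed2 S g \<longleftrightarrow> (\<exists>U. S \<subseteq> U \<and> real_analytic2_on U g)"

definition analytic_on_closed3 ::
    "((real \<times> real) \<times> real) set \<Rightarrow> ((real \<times> real) \<times> real \<Rightarrow> real) \<Rightarrow> bool" where
  "analytic_on_closed3 S g \<longleftrightarrow> (\<exists>U. S \<subseteq> U \<and> real_analytic3_on U g)"

definition dxx :: "(real \<times> real \<Rightarrow> real) \<Rightarrow> real \<times> real \<Rightarrow> real" where
  "dxx g p = deriv (\<lambda>s. deriv (\<lambda>r. g (r, snd p)) s) (fst p)"

definition dyy :: "(real \<times> real \<Rightarrow> real) \<Rightarrow> real \<times> real \<Rightarrow> real" where
  "dyy g p = deriv (\<lambda>s. deriv (\<lambda>r. g (fst p, r)) s) (snd p)"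

definition dxy :: "(real \<times> real \<Rightarrow> real) \<Rightarrow> real \<times> real \<Rightarrow> real" where
  "dxy g p = deriv (\<lambda>s. deriv (\<lambda>r. g (r, s)) (fst p)) (snd p)"

end

theory Submission
  imports Defs "HOL-Library.Landau_Symbols"
begin

text \<open>Both solutions are analytic in \<open>t\<close>, so by the identity theorem on the segments
  \<open>{p} \<times> [-\<epsilon>, \<epsilon>]\<close> it suffices that their \<open>t\<close>-derivatives at \<open>t = 0\<close> agree on the closure
  of \<open>\<Omega>\<close>. The difference \<open>w\<close> of the \<open>m\<close>-th
  \<open>t\<close>-derivatives at \<open>t = 0\<close> vanishes on the boundary, where both solutions equal \<open>f0\<close> for
  all \<open>t\<close>. Inside, the factor \<open>t\<close> in the equation makes the Laplacian of the \<open>m\<close>-th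
  \<open>t\<close>-derivative depend only on the \<open>t\<close>-jets of order below \<open>m\<close> of the second spatial
  derivatives, because the square root is smooth near \<open>t = 0\<close>: there its argument is
  \<open>f0\<^sub>x\<^sub>y\<^sup>2 - f0\<^sub>x\<^sub>x f0\<^sub>y\<^sub>y = f0\<^sub>x\<^sub>x\<^sup>2 + f0\<^sub>x\<^sub>y\<^sup>2 > 0\<close>, \<open>f0\<close> being harmonic with nonvanishing Hessian.
  Hence \<open>w\<close> is harmonic, and it vanishes by the maximum principle.\<close>

section \<open>Smooth functions of one variable and their jets\<close>

definition smooth_on :: "real set \<Rightarrow> (real \<Rightarrow> real) \<Rightarrow> bool" where
  "smooth_on J u \<longleftrightarrow> (\<forall>m. \<forall>s\<in>J. ((deriv ^^ m) u has_real_derivative (deriv ^^ Suc m) u s) (at s))"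

lemma isCont_bounded_near:
  fixes u :: "real \<Rightarrow> real"
  assumes "isCont u x"
  obtains B d where "d > 0" "\<And>s. \<bar>s - x\<bar> < d \<Longrightarrow> \<bar>u s\<bar> \<le> B"
proof -
  obtain d where "d > 0" "\<And>s. dist s x < d \<Longrightarrow> dist (u s) (u x) < 1"
    using assms unfolding continuous_at_eps_delta by (meson zero_less_one)
  moreover have "\<bar>u s\<bar> \<le> \<bar>u x\<bar> + 1" if "dist s x < d" for s
    using \<open>\<And>s. dist s x < d \<Longrightarrow> dist (u s) (u x) < 1\<close>[OF that] by (simp add: dist_real_def)
  ultimately show ?thesis
    by (intro that[of d "\<bar>u x\<bar> + 1"]) (auto simp: dist_real_def)
qed

lemma smooth_on_taylor_bigo:
  assumes "smooth_on J u" "open J" "0 \<in> J"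
  shows "(\<lambda>t. u t - (\<Sum>j<n. (deriv ^^ j) u 0 / fact j * t ^ j)) \<in> O[at 0](\<lambda>t. t ^ n)"
proof -
  obtain r where r: "r > 0" "cball 0 r \<subseteq> J"
    using assms(2,3) open_contains_cball by blast
  have "isCont ((deriv ^^ n) u) 0"
    using assms(1,3) unfolding smooth_on_def by (blast intro: DERIV_isCont)
  then obtain d B where d: "d > 0" "\<And>s. \<bar>s - 0\<bar> < d \<Longrightarrow> \<bar>(deriv ^^ n) u s\<bar> \<le> B"
    by (rule isCont_bounded_near) auto
  have bound: "\<bar>u t - (\<Sum>j<n. (deriv ^^ j) u 0 / fact j * t ^ j)\<bar> \<le> B / fact n * \<bar>t ^ n\<bar>"
    if t: "\<bar>t\<bar> < min r d" for t
  proof -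
    have "\<forall>m s. m < n \<and> \<bar>s\<bar> \<le> \<bar>t\<bar> \<longrightarrow>
        ((deriv ^^ m) u has_real_derivative (deriv ^^ Suc m) u s) (at s)"
      using assms(1) r(2) t unfolding smooth_on_def by (auto simp: subset_iff)
    then obtain \<xi> where \<xi>: "\<bar>\<xi>\<bar> \<le> \<bar>t\<bar>"
        "u t = (\<Sum>j<n. (deriv ^^ j) u 0 / fact j * t ^ j) + (deriv ^^ n) u \<xi> / fact n * t ^ n"
      using Maclaurin_bi_le[of "\<lambda>m. (deriv ^^ m) u" u n t] by auto
    have "\<bar>u t - (\<Sum>j<n. (deriv ^^ j) u 0 / fact j * t ^ j)\<bar> = \<bar>(deriv ^^ n) u \<xi>\<bar> / fact n * \<bar>t ^ n\<bar>"
      using \<xi>(2) by (simp add: abs_mult)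
    also have "\<dots> \<le> B / fact n * \<bar>t ^ n\<bar>"
      using d(2)[of \<xi>] \<xi>(1) t by (intro mult_right_mono divide_right_mono) auto
    finally show ?thesis .
  qed
  have "\<forall>\<^sub>F t in at 0. \<bar>t\<bar> < min r d"
    using r(1) d(1) by (auto simp: eventually_at dist_real_def intro!: exI[of _ "min r d"])
  then have "\<forall>\<^sub>F t in at 0. norm (u t - (\<Sum>j<n. (deriv ^^ j) u 0 / fact j * t ^ j)) \<le> B / fact n * norm (t ^ n)"
    by eventually_elim (use bound in simp)
  then show ?thesis by (rule bigoI)
qed

lemma polynomial_bigo_power_imp_zero:
  fixes c :: "nat \<Rightarrow> real"
  assumes "(\<lambda>t. \<Sum>j<n. c j * t ^ j) \<in> O[at 0](\<lambda>t. t ^ n)" "j < n"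
  shows "c j = 0"
  using assms
proof (induction n arbitrary: c j)
  case 0
  from 0(2) show ?case by simp
next
  case (Suc n)
  define q where "q = (\<lambda>t::real. \<Sum>j<n. c (Suc j) * t ^ j)"
  have split: "(\<lambda>t. \<Sum>j<Suc n. c j * t ^ j) = (\<lambda>t. c 0 + t * q t)"
    by (subst sum.lessThan_Suc_shift) (simp add: q_def sum_distrib_left mult_ac)
  have "((\<lambda>t::real. t ^ Suc n) \<longlongrightarrow> 0 ^ Suc n) (at 0)"
    by (intro tendsto_intros)
  then have "(\<lambda>t. t ^ Suc n) \<in> o[at 0](\<lambda>_. 1 :: real)"
    by (intro smalloI_tendsto) simp_all
  with Suc.prems(1) have "(\<lambda>t. c 0 + t * q t) \<in> o[at 0](\<lambda>_. 1)"
    unfolding split by (rule landau_o.big_small_trans)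
  from smalloD_tendsto[OF this] have "((\<lambda>t. c 0 + t * q t) \<longlongrightarrow> 0) (at 0)"
    by simp
  moreover have "((\<lambda>t. c 0 + t * q t) \<longlongrightarrow> c 0 + 0 * q 0) (at 0)"
    unfolding q_def by (intro tendsto_intros)
  ultimately have "0 = c 0 + 0 * q 0"
    by (rule tendsto_unique[OF at_neq_bot])
  then have c0: "c 0 = 0"
    by simp
  have "(\<lambda>t. t * q t) = (\<lambda>t. \<Sum>j<Suc n. c j * t ^ j)"
    unfolding split c0 by simp
  moreover have "(\<lambda>t. t * t ^ n) = (\<lambda>t::real. t ^ Suc n)"
    by auto
  ultimately have "(\<lambda>t. t * q t) \<in> O[at 0](\<lambda>t. t * t ^ n)"
    using Suc.prems(1) by (simp only:)
  moreover have "\<forall>\<^sub>F t in at (0::real). t \<noteq> 0"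
    by (simp add: eventually_at_filter)
  then have "(\<lambda>t. t * q t) \<in> O[at 0](\<lambda>t. t * t ^ n) \<longleftrightarrow> q \<in> O[at 0](\<lambda>t. t ^ n)"
    by (rule landau_o.big.mult_cancel_left[OF bigtheta_refl])
  ultimately have "q \<in> O[at 0](\<lambda>t. t ^ n)"
    by blast
  then have "\<forall>i<n. c (Suc i) = 0"
    unfolding q_def using Suc.IH[of "\<lambda>j. c (Suc j)"] by blast
  with c0 Suc.prems(2) show ?case
    by (cases j) auto
qed

lemma smooth_on_jets_eq_imp_bigo:
  assumes "smooth_on J u" "smooth_on J v" "open J" "0 \<in> J"
    and "\<forall>j<n. (deriv ^^ j) u 0 = (deriv ^^ j) v 0"
  shows "(\<lambda>t. u t - v t) \<in> O[at 0](\<lambda>t. t ^ n)"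
proof -
  define P where "P = (\<lambda>t. \<Sum>j<n. (deriv ^^ j) u 0 / fact j * t ^ j)"
  have "(\<lambda>t. u t - P t) \<in> O[at 0](\<lambda>t. t ^ n)"
    unfolding P_def using assms(1,3,4) by (rule smooth_on_taylor_bigo)
  moreover have "(\<lambda>t. v t - P t) \<in> O[at 0](\<lambda>t. t ^ n)"
    unfolding P_def using smooth_on_taylor_bigo[OF assms(2-4), of n] assms(5) by simp
  ultimately have "(\<lambda>t. (u t - P t) - (v t - P t)) \<in> O[at 0](\<lambda>t. t ^ n)"
    by (rule sum_in_bigo(2))
  then show ?thesis
    by simp
qed

lemma smooth_on_bigo_imp_jets_eq:
  assumes "smooth_on J u" "smooth_on J v" "open J" "0 \<in> J"
    and "(\<lambda>t. u t - v t) \<in> O[at 0](\<lambda>t. t ^ n)" "j < n"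
  shows "(deriv ^^ j) u 0 = (deriv ^^ j) v 0"
proof -
  define Pu where "Pu = (\<lambda>t. \<Sum>j<n. (deriv ^^ j) u 0 / fact j * t ^ j)"
  define Pv where "Pv = (\<lambda>t. \<Sum>j<n. (deriv ^^ j) v 0 / fact j * t ^ j)"
  have "(\<lambda>t. u t - Pu t) \<in> O[at 0](\<lambda>t. t ^ n)"
    unfolding Pu_def by (rule smooth_on_taylor_bigo[OF assms(1,3,4)])
  moreover have "(\<lambda>t. v t - Pv t) \<in> O[at 0](\<lambda>t. t ^ n)"
    unfolding Pv_def by (rule smooth_on_taylor_bigo[OF assms(2-4)])
  ultimately have "(\<lambda>t. (u t - v t) - (u t - Pu t) + (v t - Pv t)) \<in> O[at 0](\<lambda>t. t ^ n)"
    by (intro sum_in_bigo(1)[OF sum_in_bigo(2)[OF assms(5)]])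
  moreover have "(\<lambda>t. (u t - v t) - (u t - Pu t) + (v t - Pv t)) =
      (\<lambda>t. \<Sum>j<n. ((deriv ^^ j) u 0 - (deriv ^^ j) v 0) / fact j * t ^ j)"
    by (simp add: Pu_def Pv_def fun_eq_iff diff_divide_distrib left_diff_distrib sum_subtractf)
  ultimately have "((deriv ^^ j) u 0 - (deriv ^^ j) v 0) / fact j = 0"
    using polynomial_bigo_power_imp_zero[of "\<lambda>j. ((deriv ^^ j) u 0 - (deriv ^^ j) v 0) / fact j" n j]
      assms(6) by (simp only:)
  then show ?thesis
    by simp
qed

lemma abs_sqrt_diff_le:
  fixes a b c :: real
  assumes "c \<le> a" "c \<le> b" "0 < c"
  shows "\<bar>sqrt a - sqrt b\<bar> \<le> \<bar>a - b\<bar> / sqrt c"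
proof -
  have roots: "sqrt c \<le> sqrt a" "sqrt c \<le> sqrt b" "0 < sqrt c"
    using assms by auto
  have "a - b = (sqrt a - sqrt b) * (sqrt a + sqrt b)"
    using assms by (simp add: algebra_simps)
  then have "\<bar>a - b\<bar> = \<bar>sqrt a - sqrt b\<bar> * (sqrt a + sqrt b)"
    using roots by (simp add: abs_mult)
  moreover have "sqrt c \<le> sqrt a + sqrt b"
    using roots by linarith
  then have "\<bar>sqrt a - sqrt b\<bar> * sqrt c \<le> \<bar>sqrt a - sqrt b\<bar> * (sqrt a + sqrt b)"
    by (rule mult_left_mono) simp
  ultimately show ?thesis
    using roots(3) by (simp add: field_simps)
qed

lemma smooth_on_isCont:
  assumes "smooth_on J u" "s \<in> J"
  shows "isCont u s"
  using assms unfolding smooth_on_def by (metis DERIV_isCont funpow_0)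

lemma isCont_bigo_1:
  fixes v :: "real \<Rightarrow> real"
  assumes "isCont v x"
  shows "v \<in> O[at x](\<lambda>_. 1)"
proof (rule bigoI_tendsto[where c = "v x"])
  show "((\<lambda>t. v t / 1) \<longlongrightarrow> v x) (at x)"
    using assms by (simp add: isCont_def)
qed simp

lemma bigo_discriminant_diff:
  fixes a b c a' b' c' :: "'x \<Rightarrow> real"
  assumes "(\<lambda>t. a t - a' t) \<in> O[F](h)" "(\<lambda>t. b t - b' t) \<in> O[F](h)" "(\<lambda>t. c t - c' t) \<in> O[F](h)"
    and "b \<in> O[F](\<lambda>_. 1)" "a' \<in> O[F](\<lambda>_. 1)" "(\<lambda>t. c t + c' t) \<in> O[F](\<lambda>_. 1)"
  shows "(\<lambda>t. ((c t)\<^sup>2 - a t * b t) - ((c' t)\<^sup>2 - a' t * b' t)) \<in> O[F](h)"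
proof -
  have "(\<lambda>t. (c t - c' t) * (c t + c' t) - (a t - a' t) * b t - (b t - b' t) * a' t) \<in> O[F](h)"
    by (intro sum_in_bigo(2)[OF sum_in_bigo(2)] landau_o.big_1_mult[OF assms(3,6)]
        landau_o.big_1_mult[OF assms(1,4)] landau_o.big_1_mult[OF assms(2,5)])
  moreover have "(\<lambda>t. (c t - c' t) * (c t + c' t) - (a t - a' t) * b t - (b t - b' t) * a' t)
      = (\<lambda>t. ((c t)\<^sup>2 - a t * b t) - ((c' t)\<^sup>2 - a' t * b' t))"
    by (auto simp: fun_eq_iff algebra_simps power2_eq_square)
  ultimately show ?thesis
    by (simp only:)
qed

lemma bigo_sqrt_diff:
  fixes Q Q' :: "'x \<Rightarrow> real"
  assumes "(\<lambda>t. Q t - Q' t) \<in> O[F](h)" "0 < c" "\<forall>\<^sub>F t in F. c \<le> Q t" "\<forall>\<^sub>F t in F. c \<le> Q' t"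
  shows "(\<lambda>t. sqrt (Q t) - sqrt (Q' t)) \<in> O[F](h)"
proof -
  from assms(3,4) have "\<forall>\<^sub>F t in F. norm (sqrt (Q t) - sqrt (Q' t)) \<le> 1 / sqrt c * norm (Q t - Q' t)"
    by eventually_elim (use assms(2) abs_sqrt_diff_le in auto)
  then have "(\<lambda>t. sqrt (Q t) - sqrt (Q' t)) \<in> O[F](\<lambda>t. Q t - Q' t)"
    by (rule bigoI)
  then show ?thesis
    using assms(1) by (rule landau_o.big.trans)
qed

text \<open>An \<open>O(t\<^sup>m)\<close> perturbation of \<open>a\<close>, \<open>b\<close>, \<open>c\<close> changes the square root by \<open>O(t\<^sup>m)\<close>, since its
  argument stays away from \<open>0\<close>, and the factor \<open>t\<close> turns this into \<open>O(t\<^sup>m\<^sup>+\<^sup>1)\<close>.\<close>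

lemma jet_eq_of_sqrt_equation:
  fixes a b c u a' b' c' u' :: "real \<Rightarrow> real"
  assumes smooth: "\<forall>v\<in>{a, b, c, u, a', b', c', u'}. smooth_on J v" and J: "open J" "0 \<in> J"
    and "0 < m"
    and jets: "\<forall>j<m. (deriv ^^ j) a 0 = (deriv ^^ j) a' 0 \<and> (deriv ^^ j) b 0 = (deriv ^^ j) b' 0
                  \<and> (deriv ^^ j) c 0 = (deriv ^^ j) c' 0"
    and pos: "a 0 * b 0 < (c 0)\<^sup>2"
    and eq: "\<forall>\<^sub>F s in at 0. u s = s * sqrt ((c s)\<^sup>2 - a s * b s)"
    and eq': "\<forall>\<^sub>F s in at 0. u' s = s * sqrt ((c' s)\<^sup>2 - a' s * b' s)"
  shows "(deriv ^^ m) u 0 = (deriv ^^ m) u' 0"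
proof -
  have cont: "isCont v 0" if "v \<in> {a, b, c, a', b', c'}" for v
    using smooth that J(2) smooth_on_isCont by blast
  define Q where "Q t = (c t)\<^sup>2 - a t * b t" for t
  define Q' where "Q' t = (c' t)\<^sup>2 - a' t * b' t" for t
  have "(\<lambda>t. Q t - Q' t) \<in> O[at 0](\<lambda>t. t ^ m)"
    unfolding Q_def Q'_def
  proof (rule bigo_discriminant_diff)
    show "(\<lambda>t. a t - a' t) \<in> O[at 0](\<lambda>t. t ^ m)" "(\<lambda>t. b t - b' t) \<in> O[at 0](\<lambda>t. t ^ m)"
      "(\<lambda>t. c t - c' t) \<in> O[at 0](\<lambda>t. t ^ m)"
      by (rule smooth_on_jets_eq_imp_bigo[OF _ _ J]; use smooth jets in auto)+
    show "b \<in> O[at 0](\<lambda>_. 1)" "a' \<in> O[at 0](\<lambda>_. 1)" "(\<lambda>t. c t + c' t) \<in> O[at 0](\<lambda>_. 1)"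
      by (rule isCont_bigo_1; use cont in \<open>auto intro: continuous_intros\<close>)+
  qed
  moreover have "\<forall>\<^sub>F t in at 0. Q 0 / 2 \<le> Q t" "\<forall>\<^sub>F t in at 0. Q 0 / 2 \<le> Q' t"
  proof -
    have "Q' 0 = Q 0" "0 < Q 0"
      using jets pos \<open>0 < m\<close> by (auto simp: Q_def Q'_def)
    moreover have "Q \<midarrow>0\<rightarrow> Q 0" "Q' \<midarrow>0\<rightarrow> Q' 0"
      unfolding Q_def[abs_def] Q'_def[abs_def] using cont by (auto intro!: tendsto_intros simp: isCont_def)
    ultimately show "\<forall>\<^sub>F t in at 0. Q 0 / 2 \<le> Q t" "\<forall>\<^sub>F t in at 0. Q 0 / 2 \<le> Q' t"
      by (auto dest!: order_tendstoD(1)[where a = "Q 0 / 2"] elim: eventually_mono)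
  qed
  moreover have "0 < Q 0 / 2"
    using pos by (simp add: Q_def)
  ultimately have "(\<lambda>t. sqrt (Q t) - sqrt (Q' t)) \<in> O[at 0](\<lambda>t. t ^ m)"
    by (intro bigo_sqrt_diff)
  then have "(\<lambda>t. t * (sqrt (Q t) - sqrt (Q' t))) \<in> O[at 0](\<lambda>t. t ^ Suc m)"
    unfolding power_Suc by (rule landau_o.big.mult_left)
  moreover have "\<forall>\<^sub>F t in at 0. t * (sqrt (Q t) - sqrt (Q' t)) = u t - u' t"
    using eq eq' by eventually_elim (simp add: Q_def Q'_def right_diff_distrib)
  then have "(\<lambda>t. t * (sqrt (Q t) - sqrt (Q' t))) \<in> O[at 0](\<lambda>t. t ^ Suc m) \<longleftrightarrow>
      (\<lambda>t. u t - u' t) \<in> O[at 0](\<lambda>t. t ^ Suc m)"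
    by (rule landau_o.big.in_cong)
  ultimately have "(\<lambda>t. u t - u' t) \<in> O[at 0](\<lambda>t. t ^ Suc m)"
    by blast
  then show ?thesis
    using smooth by (intro smooth_on_bigo_imp_jets_eq[OF _ _ J, of u u' "Suc m" m]) auto
qed

section \<open>Termwise differentiation of power sums\<close>

lemma power_deriv_bounds:
  fixes \<rho> K :: real
  assumes "0 < \<rho>" "\<rho> < K"
  obtains C where "\<And>n. real n * \<rho> ^ (n - 1) \<le> C * K ^ n"
    and "\<And>n. real n * real (n - 1) * \<rho> ^ (n - 2) \<le> C * K ^ n"
proof -
  have K: "K > 0" using assms by linarith
  define q where "q = sqrt (\<rho> / K)"
  have q: "0 \<le> q" "q < 1" "q\<^sup>2 = \<rho> / K" using assms K by (auto simp: q_def)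
  have "(\<lambda>n. of_nat n * q ^ n) \<longlonglongrightarrow> (0::real)"
    by (rule powser_times_n_limit_0) (use q in simp)
  then have "Bseq (\<lambda>n. of_nat n * q ^ n)"
    by (rule convergent_imp_Bseq[OF convergentI])
  then obtain B where B: "\<And>n. norm (of_nat n * q ^ n) \<le> B"
    unfolding Bseq_def by blast
  have square: "real n ^ 2 * \<rho> ^ n \<le> B\<^sup>2 * K ^ n" for n
  proof -
    have "\<rho> = q\<^sup>2 * K"
      using q(3) K by simp
    then have "real n ^ 2 * \<rho> ^ n = (real n * q ^ n)\<^sup>2 * K ^ n"
      by (simp add: power_mult_distrib power_mult[symmetric] mult.commute[of 2 n])
    also have "\<dots> \<le> B\<^sup>2 * K ^ n"
      using B[of n] K by (intro mult_right_mono) (auto simp: abs_le_square_iff[symmetric] intro: power_mono)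
    finally show ?thesis .
  qed
  show ?thesis
  proof (rule that[of "B\<^sup>2 / \<rho> + B\<^sup>2 / \<rho>\<^sup>2"])
    fix n
    have "real n * \<rho> ^ (n - 1) \<le> real n ^ 2 * \<rho> ^ n / \<rho>"
      using assms(1) by (cases n) (auto simp: power2_eq_square intro!: mult_right_mono)
    also have "\<dots> \<le> B\<^sup>2 / \<rho> * K ^ n"
      using square[of n] assms(1) by (simp add: divide_right_mono)
    also have "\<dots> \<le> (B\<^sup>2 / \<rho> + B\<^sup>2 / \<rho>\<^sup>2) * K ^ n"
      using K assms(1) by (intro mult_right_mono) auto
    finally show "real n * \<rho> ^ (n - 1) \<le> (B\<^sup>2 / \<rho> + B\<^sup>2 / \<rho>\<^sup>2) * K ^ n" .
    have "real n * real (n - 1) * \<rho> ^ (n - 2) \<le> real n ^ 2 * \<rho> ^ n / \<rho>\<^sup>2"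
      using assms(1)
      by (cases "n \<ge> 2")
        (auto simp: power2_eq_square power_diff intro!: divide_right_mono mult_right_mono)
    also have "\<dots> \<le> B\<^sup>2 / \<rho>\<^sup>2 * K ^ n"
      using square[of n] assms(1) by (simp add: divide_right_mono)
    also have "\<dots> \<le> (B\<^sup>2 / \<rho> + B\<^sup>2 / \<rho>\<^sup>2) * K ^ n"
      using K assms(1) by (intro mult_right_mono) auto
    finally show "real n * real (n - 1) * \<rho> ^ (n - 2) \<le> (B\<^sup>2 / \<rho> + B\<^sup>2 / \<rho>\<^sup>2) * K ^ n" .
  qed
qed

lemma summable_on_abs_comparison:
  fixes f g :: "'i \<Rightarrow> real"
  assumes "g summable_on A" "\<And>i. i \<in> A \<Longrightarrow> \<bar>f i\<bar> \<le> g i"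
  shows "f summable_on A"
proof -
  have "(\<lambda>i. \<bar>f i\<bar>) summable_on A"
    by (rule summable_on_comparison_test[OF assms(1)]) (use assms(2) in auto)
  then have "(\<lambda>i. norm (f i)) summable_on A"
    by simp
  then show ?thesis
    by (rule summable_on_iff_abs_summable_on_real[THEN iffD2])
qed

lemma power_sum_derivatives_summable:
  fixes w :: "'i \<Rightarrow> real" and e :: "'i \<Rightarrow> nat"
  assumes "(\<lambda>i. w i * K ^ e i) summable_on UNIV" "0 < \<rho>" "\<rho> < K"
  shows "(\<lambda>i. \<bar>w i\<bar> * (real (e i) * \<rho> ^ (e i - 1))) summable_on UNIV"
    and "(\<lambda>i. \<bar>w i\<bar> * (real (e i) * real (e i - 1) * \<rho> ^ (e i - 2))) summable_on UNIV"
proof -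
  obtain C where C1: "\<And>n. real n * \<rho> ^ (n - 1) \<le> C * K ^ n"
    and C2: "\<And>n. real n * real (n - 1) * \<rho> ^ (n - 2) \<le> C * K ^ n"
    using power_deriv_bounds[OF assms(2,3)] by blast
  have "(\<lambda>i. norm (w i * K ^ e i)) summable_on UNIV"
    using assms(1) by (rule summable_on_iff_abs_summable_on_real[THEN iffD1])
  then have M: "(\<lambda>i. C * (\<bar>w i\<bar> * K ^ e i)) summable_on UNIV"
    using assms(2,3) by (intro summable_on_cmult_right) (simp add: abs_mult)
  show "(\<lambda>i. \<bar>w i\<bar> * (real (e i) * \<rho> ^ (e i - 1))) summable_on UNIV"
  proof (rule summable_on_abs_comparison[OF M])
    fix i
    have "\<bar>w i\<bar> * (real (e i) * \<rho> ^ (e i - 1)) \<le> \<bar>w i\<bar> * (C * K ^ e i)"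
      by (rule mult_left_mono[OF C1]) simp
    then show "\<bar>\<bar>w i\<bar> * (real (e i) * \<rho> ^ (e i - 1))\<bar> \<le> C * (\<bar>w i\<bar> * K ^ e i)"
      using assms(2) by (simp add: abs_mult mult_ac)
  qed
  show "(\<lambda>i. \<bar>w i\<bar> * (real (e i) * real (e i - 1) * \<rho> ^ (e i - 2))) summable_on UNIV"
  proof (rule summable_on_abs_comparison[OF M])
    fix i
    have "\<bar>w i\<bar> * (real (e i) * real (e i - 1) * \<rho> ^ (e i - 2)) \<le> \<bar>w i\<bar> * (C * K ^ e i)"
      by (rule mult_left_mono[OF C2]) simp
    then show "\<bar>\<bar>w i\<bar> * (real (e i) * real (e i - 1) * \<rho> ^ (e i - 2))\<bar> \<le> C * (\<bar>w i\<bar> * K ^ e i)"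
      using assms(2) by (simp add: abs_mult mult_ac)
  qed
qed

lemma has_sum_diff:
  fixes f g :: "'a \<Rightarrow> 'b::topological_ab_group_add"
  assumes "(f has_sum a) A" "(g has_sum b) A"
  shows "((\<lambda>x. f x - g x) has_sum (a - b)) A"
proof -
  have "((\<lambda>x. - g x) has_sum - b) A"
    using assms(2) by (simp add: has_sum_uminus)
  from has_sum_add[OF assms(1) this] show ?thesis
    by simp
qed

lemma has_real_derivative_power_sum:
  fixes w :: "'i \<Rightarrow> real" and e :: "'i \<Rightarrow> nat"
  assumes summable: "(\<lambda>i. w i * K ^ e i) summable_on UNIV" and s: "\<bar>s\<bar> < K"
  shows "(\<lambda>i. w i * real (e i) * s ^ (e i - 1)) summable_on UNIV"
    and "((\<lambda>z. \<Sum>\<^sub>\<infinity>i. w i * z ^ e i) has_real_derivative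
            (\<Sum>\<^sub>\<infinity>i. w i * real (e i) * s ^ (e i - 1))) (at s)"
proof -
  define \<rho> where "\<rho> = (\<bar>s\<bar> + K) / 2"
  have \<rho>: "\<bar>s\<bar> < \<rho>" "\<rho> < K" "0 < \<rho>" using s by (auto simp: \<rho>_def)
  note derivatives = power_sum_derivatives_summable[OF summable \<rho>(3,2)]
  define F where "F z = (\<Sum>\<^sub>\<infinity>i. w i * z ^ e i)" for z
  define D where "D = (\<Sum>\<^sub>\<infinity>i. w i * real (e i) * s ^ (e i - 1))"
  define B where "B i = \<bar>w i\<bar> * (real (e i) * real (e i - 1) * \<rho> ^ (e i - 2))" for i
  have summable_abs: "(\<lambda>i. norm (w i * K ^ e i)) summable_on UNIV"
    using summable by (rule summable_on_iff_abs_summable_on_real[THEN iffD1])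
  have has_F: "((\<lambda>i. w i * z ^ e i) has_sum F z) UNIV" if "\<bar>z\<bar> \<le> \<rho>" for z
  proof -
    have "\<bar>w i * z ^ e i\<bar> \<le> norm (w i * K ^ e i)" for i
      using that \<rho> by (simp add: abs_mult power_abs mult_left_mono power_mono)
    then show ?thesis
      unfolding F_def by (intro has_sum_infsum summable_on_abs_comparison[OF summable_abs])
  qed
  show summable_D: "(\<lambda>i. w i * real (e i) * s ^ (e i - 1)) summable_on UNIV"
  proof (rule summable_on_abs_comparison[OF derivatives(1)])
    fix i
    have "real (e i) * \<bar>s\<bar> ^ (e i - 1) \<le> real (e i) * \<rho> ^ (e i - 1)"
      using \<rho>(1) by (intro mult_left_mono power_mono) auto
    then have "\<bar>w i\<bar> * (real (e i) * \<bar>s\<bar> ^ (e i - 1)) \<le> \<bar>w i\<bar> * (real (e i) * \<rho> ^ (e i - 1))"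
      by (rule mult_left_mono) simp
    then show "\<bar>w i * real (e i) * s ^ (e i - 1)\<bar> \<le> \<bar>w i\<bar> * (real (e i) * \<rho> ^ (e i - 1))"
      by (simp add: abs_mult power_abs mult.assoc)
  qed
  have has_D: "((\<lambda>i. w i * real (e i) * s ^ (e i - 1)) has_sum D) UNIV"
    unfolding D_def using summable_D by (rule has_sum_infsum)
  have has_B: "((\<lambda>i. B i * \<bar>h\<bar>) has_sum (\<Sum>\<^sub>\<infinity>i. B i) * \<bar>h\<bar>) UNIV" for h
    using derivatives(2) unfolding B_def by (intro has_sum_cmult_left has_sum_infsum)
  have bound: "\<bar>(F (s + h) - F s) / h - D\<bar> \<le> (\<Sum>\<^sub>\<infinity>i. B i) * \<bar>h\<bar>"
    if h: "h \<noteq> 0" "\<bar>h\<bar> < \<rho> - \<bar>s\<bar>" for h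
  proof -
    define T where "T = (\<lambda>i. w i * (((s + h) ^ e i - s ^ e i) / h - real (e i) * s ^ (e i - 1)))"
    have "((\<lambda>i. (w i * (s + h) ^ e i - w i * s ^ e i) * inverse h - w i * real (e i) * s ^ (e i - 1))
           has_sum ((F (s + h) - F s) * inverse h - D)) UNIV"
      using h \<rho> by (intro has_sum_diff has_sum_cmult_left has_F has_D) auto
    then have has_T: "(T has_sum ((F (s + h) - F s) / h - D)) UNIV"
      by (simp add: T_def algebra_simps diff_divide_distrib divide_inverse)
    have "\<bar>T i\<bar> \<le> B i * \<bar>h\<bar>" for i
    proof -
      have "norm (((s + h) ^ e i - s ^ e i) / h - of_nat (e i) * s ^ (e i - Suc 0))
            \<le> of_nat (e i) * of_nat (e i - Suc 0) * \<rho> ^ (e i - 2) * norm h"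
        by (rule lemma_termdiff3) (use h \<rho> in auto)
      then have "\<bar>w i\<bar> * \<bar>((s + h) ^ e i - s ^ e i) / h - real (e i) * s ^ (e i - 1)\<bar>
          \<le> \<bar>w i\<bar> * (real (e i) * real (e i - 1) * \<rho> ^ (e i - 2) * \<bar>h\<bar>)"
        by (intro mult_left_mono) auto
      then show ?thesis
        unfolding T_def B_def by (simp add: abs_mult mult_ac)
    qed
    then show ?thesis
      using norm_infsum_le[OF has_T has_B] by simp
  qed
  have "((\<lambda>h. (F (s + h) - F s) / h - D) \<longlongrightarrow> 0) (at 0)"
  proof (rule Lim_null_comparison)
    have "\<forall>\<^sub>F h in at 0. h \<noteq> 0 \<and> \<bar>h\<bar> < \<rho> - \<bar>s\<bar>"
      using \<rho> by (auto simp: eventually_at intro!: exI[of _ "\<rho> - \<bar>s\<bar>"])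
    then show "\<forall>\<^sub>F h in at 0. norm ((F (s + h) - F s) / h - D) \<le> (\<Sum>\<^sub>\<infinity>i. B i) * \<bar>h\<bar>"
      by eventually_elim (use bound in simp)
    show "((\<lambda>h. (\<Sum>\<^sub>\<infinity>i. B i) * \<bar>h\<bar>) \<longlongrightarrow> 0) (at 0)"
      by (auto intro!: tendsto_eq_intros)
  qed
  then show "((\<lambda>z. \<Sum>\<^sub>\<infinity>i. w i * z ^ e i) has_real_derivative D) (at s)"
    unfolding DERIV_def F_def by (simp add: LIM_zero_iff)
qed

section \<open>Power series in three variables\<close>

type_synonym point = "(real \<times> real) \<times> real"

definition power_series3 ::
    "(nat \<Rightarrow> nat \<Rightarrow> nat \<Rightarrow> real) \<Rightarrow> point \<Rightarrow> real \<Rightarrow> (point \<Rightarrow> real) \<Rightarrow> bool" where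
  "power_series3 c a r F \<longleftrightarrow> (\<forall>p\<in>ball a r.
     ((\<lambda>(i, j, k). c i j k * (fst (fst p) - fst (fst a)) ^ i * (snd (fst p) - snd (fst a)) ^ j
        * (snd p - snd a) ^ k) has_sum F p) UNIV)"

lemma real_analytic3_on_iff:
  "real_analytic3_on U F \<longleftrightarrow> open U \<and> (\<forall>a\<in>U. \<exists>r>0. \<exists>c. ball a r \<subseteq> U \<and> power_series3 c a r F)"
  unfolding real_analytic3_on_def power_series3_def by blast

definition Dt :: "(point \<Rightarrow> real) \<Rightarrow> point \<Rightarrow> real" where
  "Dt F p = deriv (\<lambda>s. F (fst p, s)) (snd p)"

definition Dx :: "(point \<Rightarrow> real) \<Rightarrow> point \<Rightarrow> real" where
  "Dx F p = deriv (\<lambda>r. F ((r, snd (fst p)), snd p)) (fst (fst p))"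

definition Dy :: "(point \<Rightarrow> real) \<Rightarrow> point \<Rightarrow> real" where
  "Dy F p = deriv (\<lambda>r. F ((fst (fst p), r), snd p)) (snd (fst p))"

definition coeff_Dt :: "(nat \<Rightarrow> nat \<Rightarrow> nat \<Rightarrow> real) \<Rightarrow> nat \<Rightarrow> nat \<Rightarrow> nat \<Rightarrow> real" where
  "coeff_Dt c = (\<lambda>i j k. real (k + 1) * c i j (k + 1))"

definition coeff_Dx :: "(nat \<Rightarrow> nat \<Rightarrow> nat \<Rightarrow> real) \<Rightarrow> nat \<Rightarrow> nat \<Rightarrow> nat \<Rightarrow> real" where
  "coeff_Dx c = (\<lambda>i j k. real (i + 1) * c (i + 1) j k)"

definition coeff_Dy :: "(nat \<Rightarrow> nat \<Rightarrow> nat \<Rightarrow> real) \<Rightarrow> nat \<Rightarrow> nat \<Rightarrow> nat \<Rightarrow> real" where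
  "coeff_Dy c = (\<lambda>i j k. real (j + 1) * c i (j + 1) k)"

lemma dist_point:
  "dist p q = sqrt ((fst (fst p) - fst (fst q))\<^sup>2 + (snd (fst p) - snd (fst q))\<^sup>2 + (snd p - snd q)\<^sup>2)"
  for p q :: point
  by (simp add: dist_prod_def dist_real_def)

lemma ball_point_extend_t:
  fixes a p :: point
  assumes "p \<in> ball a r"
  obtains K where "\<bar>snd p - snd a\<bar> < K" "(fst p, snd a + K) \<in> ball a r"
proof -
  have "open {K. dist (fst p, snd a + K) a < r}"
    by (intro open_Collect_less continuous_intros)
  moreover have "dist (fst p, snd a + \<bar>snd p - snd a\<bar>) a = dist p a"
    by (simp add: dist_Pair_Pair dist_real_def dist_prod_def)
  then have "\<bar>snd p - snd a\<bar> \<in> {K. dist (fst p, snd a + K) a < r}"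
    using assms by (simp add: dist_commute)
  ultimately obtain \<delta> where \<delta>: "\<delta> > 0" "ball \<bar>snd p - snd a\<bar> \<delta> \<subseteq> {K. dist (fst p, snd a + K) a < r}"
    using open_contains_ball by blast
  show ?thesis
  proof (rule that)
    show "\<bar>snd p - snd a\<bar> < \<bar>snd p - snd a\<bar> + \<delta> / 2"
      using \<delta>(1) by simp
    show "(fst p, snd a + (\<bar>snd p - snd a\<bar> + \<delta> / 2)) \<in> ball a r"
      using \<delta>(1) subsetD[OF \<delta>(2), of "\<bar>snd p - snd a\<bar> + \<delta> / 2"] by (simp add: dist_real_def dist_commute)
  qed
qed

lemma has_sum_coeff_Dt:
  fixes c :: "nat \<Rightarrow> nat \<Rightarrow> nat \<Rightarrow> real"
  assumes "((\<lambda>(i, j, k). c i j k * X ^ i * Y ^ j * (real k * T ^ (k - 1))) has_sum D) UNIV"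
  shows "((\<lambda>(i, j, k). coeff_Dt c i j k * X ^ i * Y ^ j * T ^ k) has_sum D) UNIV"
proof -
  define g where "g = (\<lambda>(i::nat, j::nat, k::nat). c i j k * X ^ i * Y ^ j * (real k * T ^ (k - 1)))"
  define h where "h = (\<lambda>(i::nat, j::nat, k::nat). (i, j, Suc k))"
  have "g \<iota> = 0" if "\<iota> \<notin> range h" for \<iota>
  proof -
    obtain i j k where \<iota>: "\<iota> = (i, j, k)" by (cases \<iota>) auto
    have "k = 0"
    proof (rule ccontr)
      assume "k \<noteq> 0"
      then have "\<iota> = h (i, j, k - 1)"
        by (simp add: h_def \<iota>)
      with that show False
        by blast
    qed
    then show ?thesis
      by (simp add: g_def \<iota>)
  qed
  then have "(g has_sum D) (range h) \<longleftrightarrow> (g has_sum D) UNIV"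
    by (intro has_sum_cong_neutral) auto
  then have "(g has_sum D) (range h)"
    using assms unfolding g_def by simp
  moreover have "inj h"
    unfolding h_def inj_def by auto
  ultimately have "((g \<circ> h) has_sum D) UNIV"
    by (simp add: has_sum_reindex)
  moreover have "g \<circ> h = (\<lambda>(i, j, k). coeff_Dt c i j k * X ^ i * Y ^ j * T ^ k)"
    by (auto simp: fun_eq_iff g_def h_def coeff_Dt_def)
  ultimately show ?thesis
    by simp
qed

lemma power_series3_has_Dt:
  assumes F: "power_series3 c a r F" and p: "p \<in> ball a r"
  shows "((\<lambda>s. F (fst p, s)) has_real_derivative Dt F p) (at (snd p))"
    and "((\<lambda>(i, j, k). coeff_Dt c i j k * (fst (fst p) - fst (fst a)) ^ i
            * (snd (fst p) - snd (fst a)) ^ j * (snd p - snd a) ^ k) has_sum Dt F p) UNIV"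
proof -
  obtain q t where p_eq: "p = (q, t)" by (cases p)
  define X Y where "X = fst q - fst (fst a)" and "Y = snd q - snd (fst a)"
  define w where "w = (\<lambda>(i::nat, j::nat, k::nat). c i j k * X ^ i * Y ^ j)"
  define e where "e = (\<lambda>(i::nat, j::nat, k::nat). k)"
  define G where "G z = (\<Sum>\<^sub>\<infinity>\<iota>. w \<iota> * z ^ e \<iota>)" for z
  define D where "D = (\<Sum>\<^sub>\<infinity>\<iota>. w \<iota> * real (e \<iota>) * (t - snd a) ^ (e \<iota> - 1))"
  have series: "((\<lambda>\<iota>. w \<iota> * (s - snd a) ^ e \<iota>) has_sum F (q, s)) UNIV"
    if "(q, s) \<in> ball a r" for s
  proof -
    have "(\<lambda>(i, j, k). c i j k * (fst q - fst (fst a)) ^ i * (snd q - snd (fst a)) ^ j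
        * (s - snd a) ^ k) = (\<lambda>\<iota>. w \<iota> * (s - snd a) ^ e \<iota>)"
      by (auto simp: w_def e_def X_def Y_def)
    with F that show ?thesis
      unfolding power_series3_def by fastforce
  qed
  obtain K where K: "\<bar>t - snd a\<bar> < K" "(q, snd a + K) \<in> ball a r"
    using ball_point_extend_t[OF p] by (auto simp: p_eq)
  have "(\<lambda>\<iota>. w \<iota> * K ^ e \<iota>) summable_on UNIV"
    using series[OF K(2)] by (auto intro: has_sum_imp_summable)
  note G_deriv = has_real_derivative_power_sum[OF this K(1), folded G_def D_def]
  define V where "V = {s. (q, s) \<in> ball a r}"
  have "open V" "t \<in> V"
    unfolding V_def using p by (auto simp: p_eq dist_commute intro!: open_Collect_less continuous_intros)
  moreover have "((\<lambda>s. G (s - snd a)) has_real_derivative D * 1) (at t)"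
    using G_deriv(2) by (rule DERIV_chain2[of G D "\<lambda>s. s - snd a" t]) (auto intro!: derivative_eq_intros)
  moreover have "G (s - snd a) = F (q, s)" if "s \<in> V" for s
    using series that unfolding V_def G_def by (auto intro: infsumI)
  ultimately have "((\<lambda>s. F (q, s)) has_real_derivative D) (at t)"
    by (auto intro: has_field_derivative_transform_within_open)
  moreover from this have "Dt F p = D"
    by (simp add: p_eq Dt_def DERIV_imp_deriv)
  ultimately show "((\<lambda>s. F (fst p, s)) has_real_derivative Dt F p) (at (snd p))"
    by (simp add: p_eq)
  have "((\<lambda>\<iota>. w \<iota> * real (e \<iota>) * (t - snd a) ^ (e \<iota> - 1)) has_sum D) UNIV"
    unfolding D_def using G_deriv(1) by (rule has_sum_infsum)
  moreover have "(\<lambda>\<iota>. w \<iota> * real (e \<iota>) * (t - snd a) ^ (e \<iota> - 1)) =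
      (\<lambda>(i, j, k). c i j k * X ^ i * Y ^ j * (real k * (t - snd a) ^ (k - 1)))"
    by (auto simp: fun_eq_iff w_def e_def)
  ultimately have "((\<lambda>(i, j, k). coeff_Dt c i j k * X ^ i * Y ^ j * (t - snd a) ^ k) has_sum D) UNIV"
    by (intro has_sum_coeff_Dt) simp
  then show "((\<lambda>(i, j, k). coeff_Dt c i j k * (fst (fst p) - fst (fst a)) ^ i
            * (snd (fst p) - snd (fst a)) ^ j * (snd p - snd a) ^ k) has_sum Dt F p) UNIV"
    unfolding \<open>Dt F p = D\<close> by (simp add: p_eq X_def Y_def)
qed

lemma power_series3_Dt:
  assumes "power_series3 c a r F"
  shows "power_series3 (coeff_Dt c) a r (Dt F)"
  using power_series3_has_Dt(2)[OF assms] unfolding power_series3_def by blast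

lemma has_sum_swap13:
  fixes f :: "nat \<Rightarrow> nat \<Rightarrow> nat \<Rightarrow> real"
  assumes "((\<lambda>(i, j, k). f i j k) has_sum S) UNIV"
  shows "((\<lambda>(i, j, k). f k j i) has_sum S) UNIV"
proof -
  have "bij_betw (\<lambda>(i, j, k). (k, j, i)) UNIV (UNIV :: (nat \<times> nat \<times> nat) set)"
    by (rule bij_betw_byWitness[where f' = "\<lambda>(i, j, k). (k, j, i)"]) auto
  from has_sum_reindex_bij_betw[OF this, of "\<lambda>(i, j, k). f i j k"] assms show ?thesis
    by (simp add: case_prod_beta')
qed
lemma has_sum_swap23:
  fixes f :: "nat \<Rightarrow> nat \<Rightarrow> nat \<Rightarrow> real"
  assumes "((\<lambda>(i, j, k). f i j k) has_sum S) UNIV"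
  shows "((\<lambda>(i, j, k). f i k j) has_sum S) UNIV"
proof -
  have "bij_betw (\<lambda>(i, j, k). (i, k, j)) UNIV (UNIV :: (nat \<times> nat \<times> nat) set)"
    by (rule bij_betw_byWitness[where f' = "\<lambda>(i, j, k). (i, k, j)"]) auto
  from has_sum_reindex_bij_betw[OF this, of "\<lambda>(i, j, k). f i j k"] assms show ?thesis
    by (simp add: case_prod_beta')
qed
text \<open>Partial derivatives in \<open>x\<close> and \<open>y\<close> are \<open>t\<close>-derivatives after exchanging coordinates,
  so termwise differentiation only has to be carried out in the \<open>t\<close>-direction.\<close>

definition swap_xt :: "point \<Rightarrow> point" where
  "swap_xt p = ((snd p, snd (fst p)), fst (fst p))"

definition swap_yt :: "point \<Rightarrow> point" where
  "swap_yt p = ((fst (fst p), snd p), snd (fst p))"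

lemma swap_xt_involution [simp]: "swap_xt (swap_xt p) = p"
  by (simp add: swap_xt_def)

lemma swap_yt_involution [simp]: "swap_yt (swap_yt p) = p"
  by (simp add: swap_yt_def)

lemma dist_swap_xt [simp]: "dist (swap_xt p) (swap_xt q) = dist p q"
  by (simp add: dist_point swap_xt_def add_ac)

lemma dist_swap_yt [simp]: "dist (swap_yt p) (swap_yt q) = dist p q"
  by (simp add: dist_point swap_yt_def add_ac)

lemma Dx_eq_Dt_swap_xt: "Dx F p = Dt (F \<circ> swap_xt) (swap_xt p)"
  by (simp add: Dx_def Dt_def swap_xt_def comp_def)

lemma Dy_eq_Dt_swap_yt: "Dy F p = Dt (F \<circ> swap_yt) (swap_yt p)"
  by (simp add: Dy_def Dt_def swap_yt_def comp_def)

lemma power_series3_swap_xt: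
  assumes "power_series3 c a r F"
  shows "power_series3 (\<lambda>i j k. c k j i) (swap_xt a) r (F \<circ> swap_xt)"
  unfolding power_series3_def
proof
  fix p assume p: "p \<in> ball (swap_xt a) r"
  obtain x y t where p_eq: "p = ((x, y), t)" by (metis prod.collapse)
  obtain ax ay az where a_eq: "a = ((ax, ay), az)" by (metis prod.collapse)
  have "swap_xt p \<in> ball a r"
    using p by (metis dist_swap_xt mem_ball swap_xt_involution)
  from bspec[OF assms[unfolded power_series3_def] this] have "((\<lambda>(i, j, k). c i j k * (t - ax) ^ i * (y - ay) ^ j * (x - az) ^ k)
      has_sum F ((t, y), x)) UNIV"
    by (simp add: swap_xt_def p_eq a_eq)
  then have "((\<lambda>(i, j, k). c k j i * (t - ax) ^ k * (y - ay) ^ j * (x - az) ^ i)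
      has_sum F ((t, y), x)) UNIV"
    using has_sum_swap13[where f = "\<lambda>i j k. c i j k * (t - ax) ^ i * (y - ay) ^ j * (x - az) ^ k"]
    by simp
  then show "((\<lambda>(i, j, k). c k j i * (fst (fst p) - fst (fst (swap_xt a))) ^ i
      * (snd (fst p) - snd (fst (swap_xt a))) ^ j * (snd p - snd (swap_xt a)) ^ k)
      has_sum (F \<circ> swap_xt) p) UNIV"
    by (simp add: p_eq a_eq swap_xt_def mult_ac)
qed

lemma power_series3_swap_yt:
  assumes "power_series3 c a r F"
  shows "power_series3 (\<lambda>i j k. c i k j) (swap_yt a) r (F \<circ> swap_yt)"
  unfolding power_series3_def
proof
  fix p assume p: "p \<in> ball (swap_yt a) r"
  obtain x y t where p_eq: "p = ((x, y), t)" by (metis prod.collapse)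
  obtain ax ay az where a_eq: "a = ((ax, ay), az)" by (metis prod.collapse)
  have "swap_yt p \<in> ball a r"
    using p by (metis dist_swap_yt mem_ball swap_yt_involution)
  from bspec[OF assms[unfolded power_series3_def] this] have "((\<lambda>(i, j, k). c i j k * (x - ax) ^ i * (t - ay) ^ j * (y - az) ^ k)
      has_sum F ((x, t), y)) UNIV"
    by (simp add: swap_yt_def p_eq a_eq)
  then have "((\<lambda>(i, j, k). c i k j * (x - ax) ^ i * (t - ay) ^ k * (y - az) ^ j)
      has_sum F ((x, t), y)) UNIV"
    using has_sum_swap23[where f = "\<lambda>i j k. c i j k * (x - ax) ^ i * (t - ay) ^ j * (y - az) ^ k"]
    by simp
  then show "((\<lambda>(i, j, k). c i k j * (fst (fst p) - fst (fst (swap_yt a))) ^ i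
      * (snd (fst p) - snd (fst (swap_yt a))) ^ j * (snd p - snd (swap_yt a)) ^ k)
      has_sum (F \<circ> swap_yt) p) UNIV"
    by (simp add: p_eq a_eq swap_yt_def mult_ac)
qed

lemma power_series3_Dx:
  assumes "power_series3 c a r F"
  shows "power_series3 (coeff_Dx c) a r (Dx F)"
proof -
  have "power_series3 (coeff_Dt (\<lambda>i j k. c k j i)) (swap_xt a) r (Dt (F \<circ> swap_xt))"
    by (intro power_series3_Dt power_series3_swap_xt assms)
  from power_series3_swap_xt[OF this] show ?thesis
    by (simp add: comp_def coeff_Dt_def coeff_Dx_def Dx_eq_Dt_swap_xt[abs_def])
qed

lemma power_series3_Dy:
  assumes "power_series3 c a r F"
  shows "power_series3 (coeff_Dy c) a r (Dy F)"
proof -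
  have "power_series3 (coeff_Dt (\<lambda>i j k. c i k j)) (swap_yt a) r (Dt (F \<circ> swap_yt))"
    by (intro power_series3_Dt power_series3_swap_yt assms)
  from power_series3_swap_yt[OF this] show ?thesis
    by (simp add: comp_def coeff_Dt_def coeff_Dy_def Dy_eq_Dt_swap_yt[abs_def])
qed

lemma power_series3_has_Dx:
  assumes "power_series3 c a r F" "p \<in> ball a r"
  shows "((\<lambda>s. F ((s, snd (fst p)), snd p)) has_real_derivative Dx F p) (at (fst (fst p)))"
proof -
  have "swap_xt p \<in> ball (swap_xt a) r"
    using assms(2) by simp
  from power_series3_has_Dt(1)[OF power_series3_swap_xt[OF assms(1)] this] show ?thesis
    by (simp add: Dx_eq_Dt_swap_xt) (simp add: swap_xt_def comp_def)
qed

lemma power_series3_has_Dy: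
  assumes "power_series3 c a r F" "p \<in> ball a r"
  shows "((\<lambda>s. F ((fst (fst p), s), snd p)) has_real_derivative Dy F p) (at (snd (fst p)))"
proof -
  have "swap_yt p \<in> ball (swap_yt a) r"
    using assms(2) by simp
  from power_series3_has_Dt(1)[OF power_series3_swap_yt[OF assms(1)] this] show ?thesis
    by (simp add: Dy_eq_Dt_swap_yt) (simp add: swap_yt_def comp_def)
qed

lemma power_series3_centre:
  assumes "power_series3 c a r F" "0 < r"
  shows "F a = c 0 0 0"
proof -
  define g where "g = (\<lambda>(i::nat, j::nat, k::nat). c i j k * (fst (fst a) - fst (fst a)) ^ i
        * (snd (fst a) - snd (fst a)) ^ j * (snd a - snd a) ^ k)"
  have "(g has_sum F a) UNIV"
    using bspec[OF assms(1)[unfolded power_series3_def], of a] assms(2) unfolding g_def by simp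
  moreover have "(g has_sum F a) UNIV \<longleftrightarrow> (g has_sum F a) {(0, 0, 0)}"
    by (rule has_sum_cong_neutral) (auto simp: g_def)
  ultimately show ?thesis
    by (simp add: g_def has_sum_finite_iff)
qed

lemma power_series3_Dt_iter:
  assumes "power_series3 c a r F"
  shows "power_series3 ((coeff_Dt ^^ m) c) a r ((Dt ^^ m) F)"
  by (induction m) (auto intro: power_series3_Dt assms)

lemma coeff_Dt_iter_0: "(coeff_Dt ^^ m) c 0 0 0 = fact m * c 0 0 m"
proof -
  have "(coeff_Dt ^^ m) c i j k = pochhammer (real k + 1) m * c i j (k + m)" for i j k
  proof (induction m arbitrary: k)
    case (Suc m)
    then show ?case
      by (simp add: coeff_Dt_def pochhammer_rec add_ac)
  qed simp
  then show ?thesis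
    by (simp add: pochhammer_fact)
qed

lemma power_series3_Dt_iter_centre:
  assumes "power_series3 c a r F" "0 < r"
  shows "(Dt ^^ m) F a = fact m * c 0 0 m"
  using power_series3_centre[OF power_series3_Dt_iter[OF assms(1)] assms(2)]
  by (simp add: coeff_Dt_iter_0)

lemma power_series3_eq_on_t_line:
  assumes "power_series3 c a r F" "power_series3 c' a r G" "\<And>k. c 0 0 k = c' 0 0 k"
    and "p \<in> ball a r" "fst p = fst a"
  shows "F p = G p"
proof -
  have xy: "fst (fst p) - fst (fst a) = 0" "snd (fst p) - snd (fst a) = 0"
    using assms(5) by simp_all
  have "((\<lambda>(i, j, k). c i j k * 0 ^ i * 0 ^ j * (snd p - snd a) ^ k) has_sum F p) UNIV"
    using bspec[OF assms(1)[unfolded power_series3_def] assms(4)] unfolding xy .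
  moreover have "(\<lambda>(i, j, k). c i j k * 0 ^ i * 0 ^ j * (snd p - snd a) ^ k) =
      (\<lambda>(i, j, k). c' i j k * 0 ^ i * 0 ^ j * (snd p - snd a) ^ k :: real)"
    using assms(3) by (auto simp: fun_eq_iff power_0_left)
  moreover have "((\<lambda>(i, j, k). c' i j k * 0 ^ i * 0 ^ j * (snd p - snd a) ^ k) has_sum G p) UNIV"
    using bspec[OF assms(2)[unfolded power_series3_def] assms(4)] unfolding xy .
  ultimately show ?thesis
    using has_sum_unique by force
qed

lemma power_series3_add:
  assumes "power_series3 c a r F" "power_series3 c' a r G"
  shows "power_series3 (\<lambda>i j k. c i j k + c' i j k) a r (\<lambda>p. F p + G p)"
  unfolding power_series3_def
proof
  fix p assume "p \<in> ball a r"
  with assms have "((\<lambda>\<iota>. (\<lambda>(i, j, k). c i j k * (fst (fst p) - fst (fst a)) ^ i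
        * (snd (fst p) - snd (fst a)) ^ j * (snd p - snd a) ^ k) \<iota>
      + (\<lambda>(i, j, k). c' i j k * (fst (fst p) - fst (fst a)) ^ i
        * (snd (fst p) - snd (fst a)) ^ j * (snd p - snd a) ^ k) \<iota>) has_sum F p + G p) UNIV"
    unfolding power_series3_def by (intro has_sum_add) auto
  then show "((\<lambda>(i, j, k). (c i j k + c' i j k) * (fst (fst p) - fst (fst a)) ^ i
        * (snd (fst p) - snd (fst a)) ^ j * (snd p - snd a) ^ k) has_sum F p + G p) UNIV"
    by (simp add: case_prod_beta' algebra_simps)
qed

definition Lap :: "(point \<Rightarrow> real) \<Rightarrow> point \<Rightarrow> real" where
  "Lap F p = Dx (Dx F) p + Dy (Dy F) p"

definition coeff_Lap :: "(nat \<Rightarrow> nat \<Rightarrow> nat \<Rightarrow> real) \<Rightarrow> nat \<Rightarrow> nat \<Rightarrow> nat \<Rightarrow> real" where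
  "coeff_Lap c = (\<lambda>i j k. coeff_Dx (coeff_Dx c) i j k + coeff_Dy (coeff_Dy c) i j k)"

lemma power_series3_Lap:
  assumes "power_series3 c a r F"
  shows "power_series3 (coeff_Lap c) a r (Lap F)"
  unfolding coeff_Lap_def Lap_def[abs_def]
  by (intro power_series3_add power_series3_Dx power_series3_Dy assms)

lemma abs_coordinate_le_dist_point:
  fixes p q :: point
  shows "\<bar>fst (fst p) - fst (fst q)\<bar> \<le> dist p q" "\<bar>snd (fst p) - snd (fst q)\<bar> \<le> dist p q"
    and "\<bar>snd p - snd q\<bar> \<le> dist p q"
  using dist_fst_le[of "fst p" "fst q"] dist_snd_le[of "fst p" "fst q"] dist_fst_le[of p q]
    dist_snd_le[of p q]
  by (simp_all add: dist_real_def)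

lemma power_series3_isCont:
  assumes F: "power_series3 c a r F" and "0 < r"
  shows "isCont F a"
proof -
  define \<rho> where "\<rho> = r / 2"
  have \<rho>: "0 < \<rho>" "\<rho> < r" using \<open>0 < r\<close> by (auto simp: \<rho>_def)
  define summand where "summand \<iota> p = c (fst \<iota>) (fst (snd \<iota>)) (snd (snd \<iota>))
      * (fst (fst p) - fst (fst a)) ^ fst \<iota> * (snd (fst p) - snd (fst a)) ^ fst (snd \<iota>)
      * (snd p - snd a) ^ snd (snd \<iota>)" for \<iota> :: "nat \<times> nat \<times> nat" and p :: point
  define M where "M \<iota> = \<bar>c (fst \<iota>) (fst (snd \<iota>)) (snd (snd \<iota>))\<bar> * \<rho> ^ fst \<iota> * \<rho> ^ fst (snd \<iota>)
      * \<rho> ^ snd (snd \<iota>)" for \<iota> :: "nat \<times> nat \<times> nat"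
  have has_sum: "((\<lambda>\<iota>. summand \<iota> p) has_sum F p) UNIV" if "p \<in> ball a r" for p
    using bspec[OF F[unfolded power_series3_def] that] by (simp add: summand_def case_prod_beta')
  define q where "q = ((fst (fst a) + \<rho>, snd (fst a) + \<rho>), snd a + \<rho>)"
  have "dist q a = sqrt (3 * \<rho>\<^sup>2)"
    by (simp add: q_def dist_point)
  also have "\<dots> < sqrt (r\<^sup>2)"
    using \<rho> by (intro real_sqrt_less_mono) (simp add: \<rho>_def power2_eq_square field_simps)
  finally have "q \<in> ball a r"
    using \<open>0 < r\<close> by (simp add: dist_commute)
  then have "(\<lambda>\<iota>. norm (summand \<iota> q)) summable_on UNIV"
    by (rule summable_on_iff_abs_summable_on_real[THEN iffD1, OF has_sum_imp_summable[OF has_sum]])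
  moreover have "norm (summand \<iota> q) = M \<iota>" for \<iota>
    using \<rho> by (simp add: summand_def M_def q_def abs_mult)
  ultimately have summable_M: "M summable_on UNIV"
    by simp
  have bound: "norm (summand \<iota> p) \<le> M \<iota>" if "p \<in> ball a \<rho>" for \<iota> p
  proof -
    have "dist p a < \<rho>"
      using that by (simp add: dist_commute)
    then have "\<bar>fst (fst p) - fst (fst a)\<bar> \<le> \<rho>" "\<bar>snd (fst p) - snd (fst a)\<bar> \<le> \<rho>"
        "\<bar>snd p - snd a\<bar> \<le> \<rho>"
      using abs_coordinate_le_dist_point[of p a] by linarith+
    then show ?thesis
      unfolding summand_def M_def norm_mult real_norm_def abs_mult power_abs
      by (intro mult_mono power_mono mult_nonneg_nonneg) simp_all
  qed
  have has_sum_ball: "((\<lambda>\<iota>. summand \<iota> p) has_sum F p) UNIV" if "p \<in> ball a \<rho>" for p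
    using that \<rho>(2) by (intro has_sum) simp
  have uniform: "uniform_limit (ball a \<rho>) (\<lambda>X p. \<Sum>\<iota>\<in>X. summand \<iota> p) F (finite_subsets_at_top UNIV)"
    by (rule Weierstrass_m_test_general'[OF bound has_sum_ball summable_M])
  have "\<forall>\<^sub>F X in finite_subsets_at_top UNIV.
      continuous_on (ball a \<rho>) (\<lambda>p. \<Sum>\<iota>\<in>X. summand \<iota> p)"
    unfolding summand_def by (intro always_eventually allI continuous_intros)
  then have "continuous_on (ball a \<rho>) F"
    by (rule uniform_limit_theorem[OF _ uniform]) simp
  then show ?thesis
    using \<rho>(1) by (simp add: continuous_on_eq_continuous_at)
qed

lemma power_series3_mono_radius:
  "power_series3 c a r F \<Longrightarrow> r' \<le> r \<Longrightarrow> power_series3 c a r' F"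
  unfolding power_series3_def by auto

lemma real_analytic3_onE:
  assumes "real_analytic3_on U F" "a \<in> U"
  obtains r c where "0 < r" "ball a r \<subseteq> U" "power_series3 c a r F"
  using assms unfolding real_analytic3_on_iff by blast

lemma real_analytic3_on_subset:
  assumes F: "real_analytic3_on U F" and V: "open V" "V \<subseteq> U"
  shows "real_analytic3_on V F"
  unfolding real_analytic3_on_iff
proof (intro conjI ballI)
  fix a assume "a \<in> V"
  then obtain r c where "0 < r" "power_series3 c a r F"
    using V(2) by (blast elim: real_analytic3_onE[OF F])
  moreover obtain r' where "0 < r'" "ball a r' \<subseteq> V"
    using V(1) \<open>a \<in> V\<close> open_contains_ball by blast
  ultimately show "\<exists>r>0. \<exists>c. ball a r \<subseteq> V \<and> power_series3 c a r F"
    by (intro exI[of _ "min r r'"] conjI exI[of _ c]) (auto intro: power_series3_mono_radius)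
qed (use V in simp)

lemma real_analytic3_on_coeff_operator:
  assumes "real_analytic3_on U F"
    and "\<And>c a r. power_series3 c a r F \<Longrightarrow> power_series3 (L c) a r (Op F)"
  shows "real_analytic3_on U (Op F)"
  using assms unfolding real_analytic3_on_iff by meson

lemma real_analytic3_on_Dt: "real_analytic3_on U F \<Longrightarrow> real_analytic3_on U (Dt F)"
  by (erule real_analytic3_on_coeff_operator) (rule power_series3_Dt)

lemma real_analytic3_on_Dx: "real_analytic3_on U F \<Longrightarrow> real_analytic3_on U (Dx F)"
  by (erule real_analytic3_on_coeff_operator) (rule power_series3_Dx)

lemma real_analytic3_on_Dy: "real_analytic3_on U F \<Longrightarrow> real_analytic3_on U (Dy F)"
  by (erule real_analytic3_on_coeff_operator) (rule power_series3_Dy)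

lemma real_analytic3_on_Lap: "real_analytic3_on U F \<Longrightarrow> real_analytic3_on U (Lap F)"
  by (erule real_analytic3_on_coeff_operator) (rule power_series3_Lap)

lemma real_analytic3_on_Dt_iter: "real_analytic3_on U F \<Longrightarrow> real_analytic3_on U ((Dt ^^ m) F)"
  by (induction m) (auto intro: real_analytic3_on_Dt)

lemma real_analytic3_on_has_Dt:
  assumes "real_analytic3_on U F" "p \<in> U"
  shows "((\<lambda>s. F (fst p, s)) has_real_derivative Dt F p) (at (snd p))"
  using assms by (auto elim!: real_analytic3_onE intro: power_series3_has_Dt(1))

lemma real_analytic3_on_has_Dx:
  assumes "real_analytic3_on U F" "p \<in> U"
  shows "((\<lambda>s. F ((s, snd (fst p)), snd p)) has_real_derivative Dx F p) (at (fst (fst p)))"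
  using assms by (auto elim!: real_analytic3_onE intro: power_series3_has_Dx)

lemma real_analytic3_on_has_Dy:
  assumes "real_analytic3_on U F" "p \<in> U"
  shows "((\<lambda>s. F ((fst (fst p), s), snd p)) has_real_derivative Dy F p) (at (snd (fst p)))"
  using assms by (auto elim!: real_analytic3_onE intro: power_series3_has_Dy)

lemma real_analytic3_on_continuous_on:
  assumes "real_analytic3_on U F"
  shows "continuous_on U F"
proof (rule continuous_at_imp_continuous_on, rule ballI)
  fix a assume "a \<in> U"
  with assms obtain r c where "0 < r" "power_series3 c a r F"
    by (blast elim: real_analytic3_onE)
  then show "isCont F a"
    by (intro power_series3_isCont)
qed

text \<open>At a centre, derivatives are read off from the coefficients, and the operators on
  coefficients commute; this replaces any appeal to the symmetry of mixed partial derivatives.\<close>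

lemma real_analytic3_on_Dt_iter_commute:
  assumes "real_analytic3_on U F" "a \<in> U"
    and Op: "\<And>c r F. power_series3 c a r F \<Longrightarrow> power_series3 (L c) a r (Op F)"
    and commute: "\<And>c. coeff_Dt (L c) = L (coeff_Dt c)"
  shows "(Dt ^^ j) (Op F) a = Op ((Dt ^^ j) F) a"
proof -
  obtain r c where "0 < r" "power_series3 c a r F"
    using assms(1,2) by (blast elim: real_analytic3_onE)
  moreover have "(coeff_Dt ^^ j) (L c) = L ((coeff_Dt ^^ j) c)"
    by (induction j) (simp_all add: commute)
  ultimately show ?thesis
    using power_series3_centre[OF power_series3_Dt_iter[OF Op]]
      power_series3_centre[OF Op[OF power_series3_Dt_iter]] by metis
qed

lemma Dt_iter_Dx_Dx:
  assumes "real_analytic3_on U F" "a \<in> U"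
  shows "(Dt ^^ j) (Dx (Dx F)) a = Dx (Dx ((Dt ^^ j) F)) a"
proof (rule real_analytic3_on_Dt_iter_commute[where Op = "\<lambda>F. Dx (Dx F)" and L = "\<lambda>c. coeff_Dx (coeff_Dx c)", OF assms])
  show "power_series3 (coeff_Dx (coeff_Dx c)) a r (Dx (Dx F))" if "power_series3 c a r F" for c r F
    using that by (intro power_series3_Dx)
  show "coeff_Dt (coeff_Dx (coeff_Dx c)) = coeff_Dx (coeff_Dx (coeff_Dt c))" for c
    by (simp add: fun_eq_iff coeff_Dt_def coeff_Dx_def)
qed

lemma Dt_iter_Dy_Dy:
  assumes "real_analytic3_on U F" "a \<in> U"
  shows "(Dt ^^ j) (Dy (Dy F)) a = Dy (Dy ((Dt ^^ j) F)) a"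
proof (rule real_analytic3_on_Dt_iter_commute[where Op = "\<lambda>F. Dy (Dy F)" and L = "\<lambda>c. coeff_Dy (coeff_Dy c)", OF assms])
  show "power_series3 (coeff_Dy (coeff_Dy c)) a r (Dy (Dy F))" if "power_series3 c a r F" for c r F
    using that by (intro power_series3_Dy)
  show "coeff_Dt (coeff_Dy (coeff_Dy c)) = coeff_Dy (coeff_Dy (coeff_Dt c))" for c
    by (simp add: fun_eq_iff coeff_Dt_def coeff_Dy_def)
qed

lemma Dt_iter_Dy_Dx:
  assumes "real_analytic3_on U F" "a \<in> U"
  shows "(Dt ^^ j) (Dy (Dx F)) a = Dy (Dx ((Dt ^^ j) F)) a"
proof (rule real_analytic3_on_Dt_iter_commute[where Op = "\<lambda>F. Dy (Dx F)" and L = "\<lambda>c. coeff_Dy (coeff_Dx c)", OF assms])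
  show "power_series3 (coeff_Dy (coeff_Dx c)) a r (Dy (Dx F))" if "power_series3 c a r F" for c r F
    using that by (intro power_series3_Dy power_series3_Dx)
  show "coeff_Dt (coeff_Dy (coeff_Dx c)) = coeff_Dy (coeff_Dx (coeff_Dt c))" for c
    by (simp add: fun_eq_iff coeff_Dt_def coeff_Dx_def coeff_Dy_def)
qed

lemma Dt_iter_Lap:
  assumes "real_analytic3_on U F" "a \<in> U"
  shows "(Dt ^^ j) (Lap F) a = Lap ((Dt ^^ j) F) a"
proof (rule real_analytic3_on_Dt_iter_commute[where Op = "Lap" and L = "coeff_Lap", OF assms])
  show "power_series3 (coeff_Lap c) a r (Lap F)" if "power_series3 c a r F" for c r F
    using that by (rule power_series3_Lap)
  show "coeff_Dt (coeff_Lap c) = coeff_Lap (coeff_Dt c)" for c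
    by (simp add: fun_eq_iff coeff_Lap_def coeff_Dt_def coeff_Dx_def coeff_Dy_def algebra_simps)
qed

lemma Dt_iter_eq_higher_deriv: "(Dt ^^ m) F p = (deriv ^^ m) (\<lambda>s. F (fst p, s)) (snd p)"
proof (induction m arbitrary: p)
  case (Suc m)
  have "(Dt ^^ Suc m) F p = deriv (\<lambda>s. (Dt ^^ m) F (fst p, s)) (snd p)"
    unfolding funpow.simps(2) comp_apply by (rule Dt_def)
  also have "(\<lambda>s. (Dt ^^ m) F (fst p, s)) = (deriv ^^ m) (\<lambda>s. F (fst p, s))"
    using Suc by (simp add: fun_eq_iff)
  finally show ?case
    by simp
qed simp

lemma real_analytic3_on_smooth_on_slice:
  assumes "real_analytic3_on U F"
  shows "smooth_on {s. (q, s) \<in> U} (\<lambda>s. F (q, s))"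
  unfolding smooth_on_def
proof (intro allI ballI)
  fix m s assume "s \<in> {s. (q, s) \<in> U}"
  then have "((\<lambda>s. (Dt ^^ m) F (q, s)) has_real_derivative Dt ((Dt ^^ m) F) (q, s)) (at s)"
    using real_analytic3_on_has_Dt[OF real_analytic3_on_Dt_iter[OF assms], of "(q, s)"] by simp
  moreover have "(\<lambda>s. (Dt ^^ m) F (q, s)) = (deriv ^^ m) (\<lambda>s. F (q, s))"
    using Dt_iter_eq_higher_deriv[of m F] by (simp add: fun_eq_iff)
  moreover have "Dt ((Dt ^^ m) F) (q, s) = (deriv ^^ Suc m) (\<lambda>s. F (q, s)) s"
    using Dt_iter_eq_higher_deriv[of "Suc m" F "(q, s)"] by simp
  ultimately show "((deriv ^^ m) (\<lambda>s. F (q, s)) has_real_derivative (deriv ^^ Suc m) (\<lambda>s. F (q, s)) s) (at s)"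
    by simp
qed

lemma real_analytic3_on_eq_near_t:
  assumes F: "real_analytic3_on U F" and G: "real_analytic3_on U G" and "(q, s0) \<in> U"
    and jets: "\<And>k. (Dt ^^ k) F (q, s0) = (Dt ^^ k) G (q, s0)"
  obtains \<delta> where "0 < \<delta>" "\<And>s. s \<in> ball s0 \<delta> \<Longrightarrow> F (q, s) = G (q, s)"
proof -
  obtain rF c where rF: "0 < rF" "power_series3 c (q, s0) rF F"
    using F \<open>(q, s0) \<in> U\<close> by (rule real_analytic3_onE)
  obtain rG c' where rG: "0 < rG" "power_series3 c' (q, s0) rG G"
    using G \<open>(q, s0) \<in> U\<close> by (rule real_analytic3_onE)
  have "power_series3 c (q, s0) (min rF rG) F" "power_series3 c' (q, s0) (min rF rG) G"
    using rF rG by (auto intro: power_series3_mono_radius)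
  moreover have "c 0 0 k = c' 0 0 k" for k
    using jets[of k] power_series3_Dt_iter_centre[OF rF(2,1), of k]
      power_series3_Dt_iter_centre[OF rG(2,1), of k] by simp
  ultimately have "F (q, s) = G (q, s)" if "s \<in> ball s0 (min rF rG)" for s
  proof (rule power_series3_eq_on_t_line)
    show "(q, s) \<in> ball (q, s0) (min rF rG)"
      using that by (simp add: dist_Pair_Pair)
  qed simp
  with rF(1) rG(1) show ?thesis
    by (intro that[of "min rF rG"]) auto
qed

lemma real_analytic3_on_eq_on_t_segment:
  assumes F: "real_analytic3_on U F" and G: "real_analytic3_on U G"
    and segment: "{q} \<times> {-\<epsilon>..\<epsilon>} \<subseteq> U"
    and jets: "\<And>k. (Dt ^^ k) F (q, 0) = (Dt ^^ k) G (q, 0)"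
    and t: "t \<in> {-\<epsilon>..\<epsilon>}"
  shows "F (q, t) = G (q, t)"
proof -
  define S where "S = {s \<in> {-\<epsilon>..\<epsilon>}. \<forall>k. (Dt ^^ k) F (q, s) = (Dt ^^ k) G (q, s)}"
  have "continuous_on {-\<epsilon>..\<epsilon>} (\<lambda>s. (Dt ^^ k) F (q, s) - (Dt ^^ k) G (q, s))" for k
  proof (intro continuous_at_imp_continuous_on ballI isCont_diff)
    fix s assume "s \<in> {-\<epsilon>..\<epsilon>}"
    then have "(q, s) \<in> U"
      using segment by auto
    then show "isCont (\<lambda>s. (Dt ^^ k) F (q, s)) s" "isCont (\<lambda>s. (Dt ^^ k) G (q, s)) s"
      using real_analytic3_on_has_Dt[OF real_analytic3_on_Dt_iter[OF F]]
        real_analytic3_on_has_Dt[OF real_analytic3_on_Dt_iter[OF G]]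
      by (metis DERIV_isCont fst_conv snd_conv)+
  qed
  then have "closedin (top_of_set {-\<epsilon>..\<epsilon>})
      (\<Inter>k. {s \<in> {-\<epsilon>..\<epsilon>}. (Dt ^^ k) F (q, s) - (Dt ^^ k) G (q, s) = 0})"
    by (intro closedin_INT continuous_closedin_preimage_constant) auto
  moreover have "S = (\<Inter>k. {s \<in> {-\<epsilon>..\<epsilon>}. (Dt ^^ k) F (q, s) - (Dt ^^ k) G (q, s) = 0})"
    by (auto simp: S_def)
  ultimately have closed: "closedin (top_of_set {-\<epsilon>..\<epsilon>}) S"
    by simp
  have "\<exists>\<delta>>0. ball s0 \<delta> \<inter> {-\<epsilon>..\<epsilon>} \<subseteq> S" if "s0 \<in> S" for s0
  proof -
    have "(q, s0) \<in> U" "\<And>k. (Dt ^^ k) F (q, s0) = (Dt ^^ k) G (q, s0)"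
      using that segment by (auto simp: S_def)
    then obtain \<delta> where \<delta>: "0 < \<delta>" "\<And>s. s \<in> ball s0 \<delta> \<Longrightarrow> F (q, s) = G (q, s)"
      by (rule real_analytic3_on_eq_near_t[OF F G]) blast
    have "s \<in> S" if "s \<in> ball s0 \<delta>" "s \<in> {-\<epsilon>..\<epsilon>}" for s
    proof -
      have "\<forall>\<^sub>F x in nhds s. x \<in> ball s0 \<delta>"
        using that(1) by (intro eventually_nhds_in_open) auto
      then have "\<forall>\<^sub>F x in nhds s. F (q, x) = G (q, x)"
        by (rule eventually_mono) (rule \<delta>(2))
      then have "(deriv ^^ k) (\<lambda>x. F (q, x)) s = (deriv ^^ k) (\<lambda>x. G (q, x)) s" for k
        by (rule higher_deriv_cong_ev) (rule refl)
      then show ?thesis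
        using that(2) by (simp add: S_def Dt_iter_eq_higher_deriv)
    qed
    with \<delta>(1) show ?thesis
      by blast
  qed
  then have "openin (top_of_set {-\<epsilon>..\<epsilon>}) S"
    unfolding openin_contains_ball by (auto simp: S_def)
  then have "S = {} \<or> S = {-\<epsilon>..\<epsilon>}"
    using closed connected_Icc[of "-\<epsilon>" \<epsilon>] unfolding connected_clopen by blast
  moreover have "0 \<in> S"
    using t jets by (auto simp: S_def)
  ultimately have "S = {-\<epsilon>..\<epsilon>}"
    by blast
  then have "(Dt ^^ 0) F (q, t) = (Dt ^^ 0) G (q, t)"
    using t unfolding S_def by blast
  then show ?thesis
    by simp
qed

section \<open>Harmonic functions and planar domains\<close>

lemma second_derivative_nonpos_at_local_max:
  fixes \<phi> \<phi>' :: "real \<Rightarrow> real"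
  assumes "0 < d"
    and \<phi>': "\<And>x. \<bar>x - x0\<bar> < d \<Longrightarrow> (\<phi> has_real_derivative \<phi>' x) (at x)"
    and A: "(\<phi>' has_real_derivative A) (at x0)"
    and max: "\<And>x. \<bar>x - x0\<bar> < d \<Longrightarrow> \<phi> x \<le> \<phi> x0"
  shows "A \<le> 0"
proof (rule ccontr)
  assume "\<not> A \<le> 0"
  have "(\<phi> has_real_derivative \<phi>' x0) (at x0)"
    using \<phi>' \<open>0 < d\<close> by simp
  then have "\<phi>' x0 = 0"
    by (rule DERIV_local_max[OF _ \<open>0 < d\<close>]) (use max in \<open>auto simp: abs_minus_commute\<close>)
  moreover obtain e where e: "0 < e" "\<And>h. 0 < h \<Longrightarrow> h < e \<Longrightarrow> \<phi>' x0 < \<phi>' (x0 + h)"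
    using DERIV_pos_inc_right[OF A] \<open>\<not> A \<le> 0\<close> by auto
  define h where "h = min e d / 2"
  have h: "0 < h" "h < e" "h < d"
    using e \<open>0 < d\<close> by (auto simp: h_def)
  obtain z where z: "x0 < z" "z < x0 + h" "\<phi> (x0 + h) - \<phi> x0 = h * \<phi>' z"
    using MVT2[of x0 "x0 + h" \<phi> \<phi>'] h \<phi>' by force
  ultimately have "0 < \<phi>' z"
    using e(2)[of "z - x0"] h by simp
  with z(3) h(1) have "\<phi> x0 < \<phi> (x0 + h)"
    by (simp add: algebra_simps)
  moreover have "\<phi> (x0 + h) \<le> \<phi> x0"
    using max[of "x0 + h"] h by simp
  ultimately show False
    by simp
qed

lemma local_max_second_partials_nonpos:
  fixes \<Omega> :: "(real \<times> real) set" and v vx vy :: "real \<times> real \<Rightarrow> real"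
  assumes "open \<Omega>" "q \<in> \<Omega>"
    and vx: "\<And>p. p \<in> \<Omega> \<Longrightarrow> ((\<lambda>r. v (r, snd p)) has_real_derivative vx p) (at (fst p))"
    and vxx: "((\<lambda>r. vx (r, snd q)) has_real_derivative A) (at (fst q))"
    and vy: "\<And>p. p \<in> \<Omega> \<Longrightarrow> ((\<lambda>s. v (fst p, s)) has_real_derivative vy p) (at (snd p))"
    and vyy: "((\<lambda>s. vy (fst q, s)) has_real_derivative B) (at (snd q))"
    and max: "\<And>p. p \<in> \<Omega> \<Longrightarrow> v p \<le> v q"
  shows "A \<le> 0" "B \<le> 0"
proof -
  obtain e where e: "0 < e" "ball q e \<subseteq> \<Omega>"
    using assms(1,2) open_contains_ball by blast
  have x_line: "(x, snd q) \<in> \<Omega>" if "\<bar>x - fst q\<bar> < e" for x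
    using that e(2) by (cases q) (auto simp: dist_Pair_Pair dist_real_def abs_minus_commute)
  have y_line: "(fst q, y) \<in> \<Omega>" if "\<bar>y - snd q\<bar> < e" for y
    using that e(2) by (cases q) (auto simp: dist_Pair_Pair dist_real_def abs_minus_commute)
  show "A \<le> 0"
  proof (rule second_derivative_nonpos_at_local_max[OF e(1)])
    show "((\<lambda>r. v (r, snd q)) has_real_derivative vx (x, snd q)) (at x)" if "\<bar>x - fst q\<bar> < e" for x
      using vx[OF x_line[OF that]] by simp
    show "v (x, snd q) \<le> v (fst q, snd q)" if "\<bar>x - fst q\<bar> < e" for x
      using max[OF x_line[OF that]] by simp
  qed (use vxx in simp)
  show "B \<le> 0"
  proof (rule second_derivative_nonpos_at_local_max[OF e(1)])
    show "((\<lambda>s. v (fst q, s)) has_real_derivative vy (fst q, y)) (at y)" if "\<bar>y - snd q\<bar> < e" for y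
      using vy[OF y_line[OF that]] by simp
    show "v (fst q, y) \<le> v (fst q, snd q)" if "\<bar>y - snd q\<bar> < e" for y
      using max[OF y_line[OF that]] by simp
  qed (use vyy in simp)
qed

lemma continuous_on_closure_max_in_interior:
  fixes \<Omega> :: "'a::heine_borel set" and v :: "'a \<Rightarrow> real"
  assumes "open \<Omega>" "bounded \<Omega>" "continuous_on (closure \<Omega>) v" "p0 \<in> closure \<Omega>"
    and "\<And>p. p \<in> frontier \<Omega> \<Longrightarrow> v p < v p0"
  obtains q where "q \<in> \<Omega>" "\<And>p. p \<in> closure \<Omega> \<Longrightarrow> v p \<le> v q"
proof -
  have "compact (closure \<Omega>)" "closure \<Omega> \<noteq> {}"
    using assms(2,4) by (auto simp: compact_closure)
  then obtain q where q: "q \<in> closure \<Omega>" "\<And>p. p \<in> closure \<Omega> \<Longrightarrow> v p \<le> v q"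
    using continuous_attains_sup[OF _ _ assms(3)] by blast
  moreover have "q \<in> \<Omega>"
  proof (rule ccontr)
    assume "q \<notin> \<Omega>"
    then have "v q < v p0"
      using q(1) assms(1,5) by (simp add: frontier_def interior_open)
    with q(2)[OF assms(4)] show False
      by simp
  qed
  ultimately show ?thesis
    using that by blast
qed

lemma subharmonic_maximum_principle:
  fixes \<Omega> :: "(real \<times> real) set" and w wx wy wxx wyy :: "real \<times> real \<Rightarrow> real"
  assumes "open \<Omega>" "bounded \<Omega>" "continuous_on (closure \<Omega>) w"
    and wx: "\<And>p. p \<in> \<Omega> \<Longrightarrow> ((\<lambda>r. w (r, snd p)) has_real_derivative wx p) (at (fst p))"
    and wxx: "\<And>p. p \<in> \<Omega> \<Longrightarrow> ((\<lambda>r. wx (r, snd p)) has_real_derivative wxx p) (at (fst p))"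
    and wy: "\<And>p. p \<in> \<Omega> \<Longrightarrow> ((\<lambda>s. w (fst p, s)) has_real_derivative wy p) (at (snd p))"
    and wyy: "\<And>p. p \<in> \<Omega> \<Longrightarrow> ((\<lambda>s. wy (fst p, s)) has_real_derivative wyy p) (at (snd p))"
    and subharmonic: "\<And>p. p \<in> \<Omega> \<Longrightarrow> 0 \<le> wxx p + wyy p"
    and boundary: "\<And>p. p \<in> frontier \<Omega> \<Longrightarrow> w p \<le> 0"
    and p0: "p0 \<in> closure \<Omega>"
  shows "w p0 \<le> 0"
proof (rule ccontr)
  assume "\<not> w p0 \<le> 0"
  obtain R where R: "\<And>p. p \<in> closure \<Omega> \<Longrightarrow> norm p \<le> R"
    using bounded_closure[OF assms(2)] unfolding bounded_iff by blast
  define \<delta> where "\<delta> = w p0 / (2 * (R\<^sup>2 + 1))"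
  have \<delta>: "0 < \<delta>" "\<delta> * R\<^sup>2 < w p0"
    using \<open>\<not> w p0 \<le> 0\<close> by (auto simp: \<delta>_def field_simps add_pos_nonneg)
  define v where "v p = w p + \<delta> * ((fst p)\<^sup>2 + (snd p)\<^sup>2)" for p
  have "v p < v p0" if "p \<in> frontier \<Omega>" for p
  proof -
    have "(fst p)\<^sup>2 + (snd p)\<^sup>2 = (norm p)\<^sup>2"
      by (cases p) (simp add: norm_Pair)
    also have "\<dots> \<le> R\<^sup>2"
      using R that assms(1) by (intro power_mono) (auto simp: frontier_def)
    finally have "\<delta> * ((fst p)\<^sup>2 + (snd p)\<^sup>2) \<le> \<delta> * R\<^sup>2"
      using \<delta>(1) by (intro mult_left_mono) auto
    moreover have "0 \<le> \<delta> * ((fst p0)\<^sup>2 + (snd p0)\<^sup>2)"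
      using \<delta>(1) by simp
    ultimately show ?thesis
      using \<delta>(2) boundary[OF that] unfolding v_def by linarith
  qed
  moreover have "continuous_on (closure \<Omega>) v"
    unfolding v_def[abs_def] by (intro continuous_intros assms(3))
  ultimately obtain q where "q \<in> \<Omega>" "\<And>p. p \<in> closure \<Omega> \<Longrightarrow> v p \<le> v q"
    using continuous_on_closure_max_in_interior[OF assms(1,2) _ p0] by blast
  then have max: "v p \<le> v q" if "p \<in> \<Omega>" for p
    using that closure_subset by blast
  text \<open>The perturbation \<open>\<delta> |p|\<^sup>2\<close> has Laplacian \<open>4 \<delta> > 0\<close>, so \<open>v\<close> cannot have an interior maximum.\<close>
  have vx: "((\<lambda>r. v (r, snd p)) has_real_derivative wx p + \<delta> * (2 * fst p)) (at (fst p))"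
    if "p \<in> \<Omega>" for p
    unfolding v_def using wx[OF that] by (auto intro!: derivative_eq_intros)
  have vxx: "((\<lambda>r. wx (r, snd q) + \<delta> * (2 * fst (r, snd q))) has_real_derivative wxx q + 2 * \<delta>)
      (at (fst q))"
    using wxx[OF \<open>q \<in> \<Omega>\<close>] by (auto intro!: derivative_eq_intros)
  have vy: "((\<lambda>s. v (fst p, s)) has_real_derivative wy p + \<delta> * (2 * snd p)) (at (snd p))"
    if "p \<in> \<Omega>" for p
    unfolding v_def using wy[OF that] by (auto intro!: derivative_eq_intros)
  have vyy: "((\<lambda>s. wy (fst q, s) + \<delta> * (2 * snd (fst q, s))) has_real_derivative wyy q + 2 * \<delta>)
      (at (snd q))"
    using wyy[OF \<open>q \<in> \<Omega>\<close>] by (auto intro!: derivative_eq_intros)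
  from local_max_second_partials_nonpos[OF assms(1) \<open>q \<in> \<Omega>\<close> vx vxx vy vyy max]
    subharmonic[OF \<open>q \<in> \<Omega>\<close>] \<delta>(1) show False
    by simp
qed

lemma harmonic_vanishing_on_frontier:
  fixes \<Omega> :: "(real \<times> real) set" and w wx wy wxx wyy :: "real \<times> real \<Rightarrow> real"
  assumes "open \<Omega>" "bounded \<Omega>" "continuous_on (closure \<Omega>) w"
    and wx: "\<And>p. p \<in> \<Omega> \<Longrightarrow> ((\<lambda>r. w (r, snd p)) has_real_derivative wx p) (at (fst p))"
    and wxx: "\<And>p. p \<in> \<Omega> \<Longrightarrow> ((\<lambda>r. wx (r, snd p)) has_real_derivative wxx p) (at (fst p))"
    and wy: "\<And>p. p \<in> \<Omega> \<Longrightarrow> ((\<lambda>s. w (fst p, s)) has_real_derivative wy p) (at (snd p))"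
    and wyy: "\<And>p. p \<in> \<Omega> \<Longrightarrow> ((\<lambda>s. wy (fst p, s)) has_real_derivative wyy p) (at (snd p))"
    and harmonic: "\<And>p. p \<in> \<Omega> \<Longrightarrow> wxx p + wyy p = 0"
    and boundary: "\<And>p. p \<in> frontier \<Omega> \<Longrightarrow> w p = 0"
    and "p \<in> closure \<Omega>"
  shows "w p = 0"
proof -
  have "w p \<le> 0"
    by (rule subharmonic_maximum_principle[OF assms(1-3) wx wxx wy wyy])
      (use harmonic boundary \<open>p \<in> closure \<Omega>\<close> in auto)
  moreover have "- w p \<le> 0"
  proof (rule subharmonic_maximum_principle[where w = "\<lambda>p. - w p" and wx = "\<lambda>p. - wx p"
        and wxx = "\<lambda>p. - wxx p" and wy = "\<lambda>p. - wy p" and wyy = "\<lambda>p. - wyy p", OF assms(1,2)])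
    show "continuous_on (closure \<Omega>) (\<lambda>p. - w p)"
      using assms(3) by (rule continuous_on_minus)
    show "((\<lambda>r. - w (r, snd q)) has_real_derivative - wx q) (at (fst q))" if "q \<in> \<Omega>" for q
      using wx[OF that] by (rule DERIV_minus)
    show "((\<lambda>r. - wx (r, snd q)) has_real_derivative - wxx q) (at (fst q))" if "q \<in> \<Omega>" for q
      using wxx[OF that] by (rule DERIV_minus)
    show "((\<lambda>s. - w (fst q, s)) has_real_derivative - wy q) (at (snd q))" if "q \<in> \<Omega>" for q
      using wy[OF that] by (rule DERIV_minus)
    show "((\<lambda>s. - wy (fst q, s)) has_real_derivative - wyy q) (at (snd q))" if "q \<in> \<Omega>" for q
      using wyy[OF that] by (rule DERIV_minus)
    show "0 \<le> - wxx q + - wyy q" if "q \<in> \<Omega>" for q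
      using harmonic[OF that] by simp
    show "- w q \<le> 0" if "q \<in> frontier \<Omega>" for q
      using boundary[OF that] by simp
  qed (rule \<open>p \<in> closure \<Omega>\<close>)
  ultimately show ?thesis
    by simp
qed

lemma periodic_range:
  fixes \<gamma> :: "real \<Rightarrow> 'a"
  assumes "0 < P" "\<And>t. \<gamma> (t + P) = \<gamma> t"
  shows "range \<gamma> = \<gamma> ` {0..P}"
proof -
  have shift: "\<gamma> (t + of_int n * P) = \<gamma> t" for t n
  proof (induction n rule: int_induct[where k = 0])
    case (step1 n)
    then show ?case
      using assms(2)[of "t + of_int n * P"] by (simp add: algebra_simps)
  next
    case (step2 n)
    then show ?case
      using assms(2)[of "t + of_int (n - 1) * P"] by (simp add: algebra_simps)
  qed simp
  have "\<gamma> t \<in> \<gamma> ` {0..P}" for t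
  proof -
    define n where "n = \<lfloor>t / P\<rfloor>"
    have "of_int n * P \<le> t" "t < (of_int n + 1) * P"
      using assms(1) unfolding n_def
      by (simp_all add: pos_le_divide_eq[symmetric] pos_divide_less_eq[symmetric])
    moreover have "\<gamma> t = \<gamma> (t - of_int n * P)"
      using shift[of "t - of_int n * P" n] by simp
    ultimately show ?thesis
      by (intro image_eqI[of _ _ "t - of_int n * P"]) (auto simp: algebra_simps)
  qed
  then show ?thesis
    by blast
qed

lemma jordan_domain_analytic_open_bounded:
  assumes "jordan_domain_analytic \<Omega>"
  shows "open \<Omega>" "bounded \<Omega>"
proof -
  obtain \<gamma> :: "real \<Rightarrow> real \<times> real" and P where "0 < P" and
      curve: "(\<forall>t. \<gamma> (t + P) = \<gamma> t) \<and> inj_on \<gamma> {0..<P} \<and>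
        real_analytic1_on UNIV (\<lambda>t. fst (\<gamma> t)) \<and> real_analytic1_on UNIV (\<lambda>t. snd (\<gamma> t)) \<and>
        (\<forall>t. \<exists>v. (\<gamma> has_vector_derivative v) (at t) \<and> v \<noteq> 0) \<and> \<Omega> = inside (range \<gamma>)"
    using assms unfolding jordan_domain_analytic_def by blast
  then have P: "0 < P" "\<And>t. \<gamma> (t + P) = \<gamma> t"
    and derivative: "\<And>t. \<exists>v. (\<gamma> has_vector_derivative v) (at t)"
    and \<Omega>: "\<Omega> = inside (range \<gamma>)"
    by blast+
  have "continuous_on UNIV \<gamma>"
    using derivative by (metis continuous_at_imp_continuous_on has_vector_derivative_continuous)
  then have "compact (\<gamma> ` {0..P})"
    by (rule compact_continuous_image[OF continuous_on_subset]) auto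
  then have "compact (range \<gamma>)"
    using periodic_range[where \<gamma> = \<gamma> and P = P, OF P] by simp
  then show "open \<Omega>" "bounded \<Omega>"
    unfolding \<Omega> by (auto intro: open_inside bounded_inside compact_imp_closed compact_imp_bounded)
qed

lemma eventually_slice_in_open:
  fixes V :: "(real \<times> real) set"
  assumes "open V" "(x, y) \<in> V"
  shows "\<forall>\<^sub>F r in nhds x. (r, y) \<in> V" "\<forall>\<^sub>F s in nhds y. (x, s) \<in> V"
proof -
  have "open ((\<lambda>r. (r, y)) -` V)" "open ((\<lambda>s. (x, s)) -` V)"
    using assms(1) by (intro open_vimage continuous_intros; simp)+
  moreover have "x \<in> (\<lambda>r. (r, y)) -` V" "y \<in> (\<lambda>s. (x, s)) -` V"
    using assms(2) by simp_all
  ultimately show "\<forall>\<^sub>F r in nhds x. (r, y) \<in> V" "\<forall>\<^sub>F s in nhds y. (x, s) \<in> V"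
    using eventually_nhds_in_open[of "(\<lambda>r. (r, y)) -` V" x]
      eventually_nhds_in_open[of "(\<lambda>s. (x, s)) -` V" y] by simp_all
qed

lemma deriv_slice_cong:
  fixes V :: "(real \<times> real) set"
  assumes "open V" "(x, y) \<in> V" "\<And>q. q \<in> V \<Longrightarrow> g q = h q"
  shows "deriv (\<lambda>r. g (r, y)) x = deriv (\<lambda>r. h (r, y)) x"
    and "deriv (\<lambda>s. g (x, s)) y = deriv (\<lambda>s. h (x, s)) y"
proof -
  have "\<forall>\<^sub>F r in nhds x. g (r, y) = h (r, y)"
    using eventually_slice_in_open(1)[OF assms(1,2)] by (rule eventually_mono) (rule assms(3))
  then show "deriv (\<lambda>r. g (r, y)) x = deriv (\<lambda>r. h (r, y)) x"
    by (rule deriv_cong_ev) (rule refl)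
  have "\<forall>\<^sub>F s in nhds y. g (x, s) = h (x, s)"
    using eventually_slice_in_open(2)[OF assms(1,2)] by (rule eventually_mono) (rule assms(3))
  then show "deriv (\<lambda>s. g (x, s)) y = deriv (\<lambda>s. h (x, s)) y"
    by (rule deriv_cong_ev) (rule refl)
qed

lemma dxx_cong:
  assumes "open V" "p \<in> V" "\<And>q. q \<in> V \<Longrightarrow> g q = h q"
  shows "dxx g p = dxx h p"
proof -
  have "\<forall>\<^sub>F s in nhds (fst p). (s, snd p) \<in> V"
    using assms(1,2) by (intro eventually_slice_in_open) simp_all
  then have "\<forall>\<^sub>F s in nhds (fst p). deriv (\<lambda>r. g (r, snd p)) s = deriv (\<lambda>r. h (r, snd p)) s"
    by (rule eventually_mono) (rule deriv_slice_cong(1)[OF assms(1) _ assms(3)])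
  then show ?thesis
    unfolding dxx_def by (rule deriv_cong_ev) simp
qed

lemma dyy_cong:
  assumes "open V" "p \<in> V" "\<And>q. q \<in> V \<Longrightarrow> g q = h q"
  shows "dyy g p = dyy h p"
proof -
  have "\<forall>\<^sub>F s in nhds (snd p). (fst p, s) \<in> V"
    using assms(1,2) by (intro eventually_slice_in_open) simp_all
  then have "\<forall>\<^sub>F s in nhds (snd p). deriv (\<lambda>r. g (fst p, r)) s = deriv (\<lambda>r. h (fst p, r)) s"
    by (rule eventually_mono) (rule deriv_slice_cong(2)[OF assms(1) _ assms(3)])
  then show ?thesis
    unfolding dyy_def by (rule deriv_cong_ev) simp
qed

lemma dxy_cong:
  assumes "open V" "p \<in> V" "\<And>q. q \<in> V \<Longrightarrow> g q = h q"
  shows "dxy g p = dxy h p"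
proof -
  have "\<forall>\<^sub>F s in nhds (snd p). (fst p, s) \<in> V"
    using assms(1,2) by (intro eventually_slice_in_open) simp_all
  then have "\<forall>\<^sub>F s in nhds (snd p). deriv (\<lambda>r. g (r, s)) (fst p) = deriv (\<lambda>r. h (r, s)) (fst p)"
    by (rule eventually_mono) (rule deriv_slice_cong(1)[OF assms(1) _ assms(3)])
  then show ?thesis
    unfolding dxy_def by (rule deriv_cong_ev) simp
qed

lemma Dx_Dx_eq_dxx: "Dx (Dx F) (p, t) = dxx (\<lambda>q. F (q, t)) p"
  by (simp add: dxx_def Dx_def)

lemma Dy_Dy_eq_dyy: "Dy (Dy F) (p, t) = dyy (\<lambda>q. F (q, t)) p"
  by (simp add: dyy_def Dy_def)

lemma Dy_Dx_eq_dxy: "Dy (Dx F) (p, t) = dxy (\<lambda>q. F (q, t)) p"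
  by (simp add: dxy_def Dx_def Dy_def)

definition solves_hessian_eq :: "(real \<times> real) set \<Rightarrow> real \<Rightarrow> (point \<Rightarrow> real) \<Rightarrow> bool" where
  "solves_hessian_eq K \<epsilon> F \<longleftrightarrow> (\<forall>p\<in>K. \<forall>t\<in>{-\<epsilon>..\<epsilon>}.
     dxx (\<lambda>q. F (q, t)) p + dyy (\<lambda>q. F (q, t)) p =
     t * sqrt ((dxy (\<lambda>q. F (q, t)) p)\<^sup>2 - dxx (\<lambda>q. F (q, t)) p * dyy (\<lambda>q. F (q, t)) p))"

lemma solves_hessian_eqD:
  assumes "solves_hessian_eq K \<epsilon> F" "p \<in> K" "t \<in> {-\<epsilon>..\<epsilon>}"
  shows "Lap F (p, t) = t * sqrt ((Dy (Dx F) (p, t))\<^sup>2 - Dx (Dx F) (p, t) * Dy (Dy F) (p, t))"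
  using assms unfolding solves_hessian_eq_def Lap_def Dx_Dx_eq_dxx Dy_Dy_eq_dyy Dy_Dx_eq_dxy
  by blast

lemma Dt_iter_second_partials_eq:
  assumes F: "real_analytic3_on U F" and G: "real_analytic3_on U G"
    and "open \<Omega>" "p \<in> \<Omega>" "(p, 0) \<in> U"
    and eq: "\<And>q. q \<in> \<Omega> \<Longrightarrow> (Dt ^^ j) F (q, 0) = (Dt ^^ j) G (q, 0)"
  shows "(Dt ^^ j) (Dx (Dx F)) (p, 0) = (Dt ^^ j) (Dx (Dx G)) (p, 0)"
    and "(Dt ^^ j) (Dy (Dy F)) (p, 0) = (Dt ^^ j) (Dy (Dy G)) (p, 0)"
    and "(Dt ^^ j) (Dy (Dx F)) (p, 0) = (Dt ^^ j) (Dy (Dx G)) (p, 0)"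
proof -
  have "dxx (\<lambda>q. (Dt ^^ j) F (q, 0)) p = dxx (\<lambda>q. (Dt ^^ j) G (q, 0)) p"
    "dyy (\<lambda>q. (Dt ^^ j) F (q, 0)) p = dyy (\<lambda>q. (Dt ^^ j) G (q, 0)) p"
    "dxy (\<lambda>q. (Dt ^^ j) F (q, 0)) p = dxy (\<lambda>q. (Dt ^^ j) G (q, 0)) p"
    using assms(3,4) eq by (blast intro: dxx_cong dyy_cong dxy_cong)+
  then show "(Dt ^^ j) (Dx (Dx F)) (p, 0) = (Dt ^^ j) (Dx (Dx G)) (p, 0)"
    and "(Dt ^^ j) (Dy (Dy F)) (p, 0) = (Dt ^^ j) (Dy (Dy G)) (p, 0)"
    and "(Dt ^^ j) (Dy (Dx F)) (p, 0) = (Dt ^^ j) (Dy (Dx G)) (p, 0)"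
    using assms(5)
    by (simp_all add: Dt_iter_Dx_Dx[OF F] Dt_iter_Dx_Dx[OF G] Dt_iter_Dy_Dy[OF F] Dt_iter_Dy_Dy[OF G]
        Dt_iter_Dy_Dx[OF F] Dt_iter_Dy_Dx[OF G] Dx_Dx_eq_dxx Dy_Dy_eq_dyy Dy_Dx_eq_dxy)
qed

lemma Lap_Dt_iter_eq_at_initial_time:
  assumes F: "real_analytic3_on U F" and G: "real_analytic3_on U G"
    and "open \<Omega>" "p \<in> \<Omega>" "0 < \<epsilon>" "\<Omega> \<times> {-\<epsilon>..\<epsilon>} \<subseteq> U"
    and pde: "solves_hessian_eq \<Omega> \<epsilon> F" "solves_hessian_eq \<Omega> \<epsilon> G"
    and hessian: "Dx (Dx F) (p, 0) * Dy (Dy F) (p, 0) < (Dy (Dx F) (p, 0))\<^sup>2"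
    and "0 < m"
    and lower: "\<And>j q. j < m \<Longrightarrow> q \<in> \<Omega> \<Longrightarrow> (Dt ^^ j) F (q, 0) = (Dt ^^ j) G (q, 0)"
  shows "Lap ((Dt ^^ m) F) (p, 0) = Lap ((Dt ^^ m) G) (p, 0)"
proof -
  define J where "J = {s. (p, s) \<in> U}"
  have "(p, 0) \<in> U"
    using assms(4-6) by auto
  moreover have "open ((\<lambda>s. (p, s)) -` U)"
    using F unfolding real_analytic3_on_iff by (intro open_vimage continuous_intros) auto
  ultimately have J: "open J" "0 \<in> J"
    by (simp_all add: J_def vimage_def)
  have slice: "smooth_on J (\<lambda>s. H (p, s))" "(deriv ^^ j) (\<lambda>s. H (p, s)) 0 = (Dt ^^ j) H (p, 0)"
    if "real_analytic3_on U H" for H j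
    using real_analytic3_on_smooth_on_slice[OF that] Dt_iter_eq_higher_deriv[of j H "(p, 0)"]
    by (simp_all add: J_def)
  have analytic: "real_analytic3_on U H"
    if "H \<in> {Dx (Dx F), Dy (Dy F), Dy (Dx F), Lap F, Dx (Dx G), Dy (Dy G), Dy (Dx G), Lap G}" for H
    using that F G by (auto intro: real_analytic3_on_Dx real_analytic3_on_Dy real_analytic3_on_Lap)
  have "(deriv ^^ m) (\<lambda>s. Lap F (p, s)) 0 = (deriv ^^ m) (\<lambda>s. Lap G (p, s)) 0"
  proof (rule jet_eq_of_sqrt_equation[OF _ J \<open>0 < m\<close>])
    show "\<forall>v\<in>{\<lambda>s. Dx (Dx F) (p, s), \<lambda>s. Dy (Dy F) (p, s), \<lambda>s. Dy (Dx F) (p, s), \<lambda>s. Lap F (p, s),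
        \<lambda>s. Dx (Dx G) (p, s), \<lambda>s. Dy (Dy G) (p, s), \<lambda>s. Dy (Dx G) (p, s), \<lambda>s. Lap G (p, s)}.
        smooth_on J v"
      using slice(1)[OF analytic] by auto
    show "\<forall>j<m. (deriv ^^ j) (\<lambda>s. Dx (Dx F) (p, s)) 0 = (deriv ^^ j) (\<lambda>s. Dx (Dx G) (p, s)) 0 \<and>
        (deriv ^^ j) (\<lambda>s. Dy (Dy F) (p, s)) 0 = (deriv ^^ j) (\<lambda>s. Dy (Dy G) (p, s)) 0 \<and>
        (deriv ^^ j) (\<lambda>s. Dy (Dx F) (p, s)) 0 = (deriv ^^ j) (\<lambda>s. Dy (Dx G) (p, s)) 0"
      using Dt_iter_second_partials_eq[OF F G assms(3,4) \<open>(p, 0) \<in> U\<close> lower]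
      by (simp add: slice(2) analytic)
    have "\<forall>\<^sub>F s in at 0. s \<in> {-\<epsilon>..\<epsilon>}"
      using \<open>0 < \<epsilon>\<close> by (auto simp: eventually_at dist_real_def intro!: exI[of _ \<epsilon>])
    then show "\<forall>\<^sub>F s in at 0. Lap F (p, s) = s * sqrt ((Dy (Dx F) (p, s))\<^sup>2 - Dx (Dx F) (p, s) * Dy (Dy F) (p, s))"
      and "\<forall>\<^sub>F s in at 0. Lap G (p, s) = s * sqrt ((Dy (Dx G) (p, s))\<^sup>2 - Dx (Dx G) (p, s) * Dy (Dy G) (p, s))"
      by (auto elim!: eventually_mono intro: solves_hessian_eqD[OF pde(1) \<open>p \<in> \<Omega>\<close>]
          solves_hessian_eqD[OF pde(2) \<open>p \<in> \<Omega>\<close>])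
  qed (use hessian in simp)
  then show ?thesis
    using Dt_iter_Lap[OF F \<open>(p, 0) \<in> U\<close>] Dt_iter_Lap[OF G \<open>(p, 0) \<in> U\<close>]
    by (simp add: slice(2) analytic)
qed

lemma hessian_condition_at_initial_time:
  assumes "open \<Omega>" "p \<in> \<Omega>" "\<And>q. q \<in> \<Omega> \<Longrightarrow> F (q, 0) = u q"
    and "dxx u p + dyy u p = 0" "dxx u p * dyy u p - (dxy u p)\<^sup>2 \<noteq> 0"
  shows "Dx (Dx F) (p, 0) * Dy (Dy F) (p, 0) < (Dy (Dx F) (p, 0))\<^sup>2"
proof -
  have "Dx (Dx F) (p, 0) = dxx u p" "Dy (Dy F) (p, 0) = dyy u p" "Dy (Dx F) (p, 0) = dxy u p"
    unfolding Dx_Dx_eq_dxx Dy_Dy_eq_dyy Dy_Dx_eq_dxy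
    using assms(1-3) by (blast intro: dxx_cong dyy_cong dxy_cong)+
  moreover have "dyy u p = - dxx u p"
    using assms(4) by simp
  moreover from this have "0 < dxx u p * dxx u p + dxy u p * dxy u p"
    using assms(5) by (auto simp: power2_eq_square sum_squares_gt_zero_iff)
  ultimately show ?thesis
    by (simp add: power2_eq_square)
qed

lemma dirichlet_uniqueness_on_slice:
  assumes "open \<Omega>" "bounded \<Omega>" and F: "real_analytic3_on U F" and G: "real_analytic3_on U G"
    and slice: "closure \<Omega> \<times> {t} \<subseteq> U"
    and Lap: "\<And>q. q \<in> \<Omega> \<Longrightarrow> Lap F (q, t) = Lap G (q, t)"
    and boundary: "\<And>q. q \<in> frontier \<Omega> \<Longrightarrow> F (q, t) = G (q, t)"
    and "q \<in> closure \<Omega>"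
  shows "F (q, t) = G (q, t)"
proof -
  have in_U: "(q, t) \<in> U" if "q \<in> \<Omega>" for q
    using that slice closure_subset by blast
  have "F (q, t) - G (q, t) = 0"
  proof (rule harmonic_vanishing_on_frontier[OF assms(1,2), where w = "\<lambda>q. F (q, t) - G (q, t)"
        and wx = "\<lambda>q. Dx F (q, t) - Dx G (q, t)" and wxx = "\<lambda>q. Dx (Dx F) (q, t) - Dx (Dx G) (q, t)"
        and wy = "\<lambda>q. Dy F (q, t) - Dy G (q, t)" and wyy = "\<lambda>q. Dy (Dy F) (q, t) - Dy (Dy G) (q, t)"])
    have "continuous_on U (\<lambda>x. F x - G x)"
      using F G by (intro continuous_on_diff real_analytic3_on_continuous_on)
    moreover have "continuous_on (closure \<Omega>) (\<lambda>q. (q, t))"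
      by (intro continuous_intros)
    moreover have "(\<lambda>q. (q, t)) ` closure \<Omega> \<subseteq> U"
      using slice by auto
    ultimately show "continuous_on (closure \<Omega>) (\<lambda>q. F (q, t) - G (q, t))"
      by (rule continuous_on_compose2)
    fix p assume "p \<in> \<Omega>"
    note Dx = real_analytic3_on_has_Dx[OF _ in_U[OF \<open>p \<in> \<Omega>\<close>]]
    note Dy = real_analytic3_on_has_Dy[OF _ in_U[OF \<open>p \<in> \<Omega>\<close>]]
    show "((\<lambda>r. F ((r, snd p), t) - G ((r, snd p), t)) has_real_derivative Dx F (p, t) - Dx G (p, t))
        (at (fst p))"
      using DERIV_diff[OF Dx[OF F] Dx[OF G]] by simp
    show "((\<lambda>r. Dx F ((r, snd p), t) - Dx G ((r, snd p), t)) has_real_derivative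
        Dx (Dx F) (p, t) - Dx (Dx G) (p, t)) (at (fst p))"
      using DERIV_diff[OF Dx[OF real_analytic3_on_Dx[OF F]] Dx[OF real_analytic3_on_Dx[OF G]]] by simp
    show "((\<lambda>s. F ((fst p, s), t) - G ((fst p, s), t)) has_real_derivative Dy F (p, t) - Dy G (p, t))
        (at (snd p))"
      using DERIV_diff[OF Dy[OF F] Dy[OF G]] by simp
    show "((\<lambda>s. Dy F ((fst p, s), t) - Dy G ((fst p, s), t)) has_real_derivative
        Dy (Dy F) (p, t) - Dy (Dy G) (p, t)) (at (snd p))"
      using DERIV_diff[OF Dy[OF real_analytic3_on_Dy[OF F]] Dy[OF real_analytic3_on_Dy[OF G]]] by simp
    show "Dx (Dx F) (p, t) - Dx (Dx G) (p, t) + (Dy (Dy F) (p, t) - Dy (Dy G) (p, t)) = 0"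
      using Lap[OF \<open>p \<in> \<Omega>\<close>] by (simp add: Lap_def)
  qed (use boundary \<open>q \<in> closure \<Omega>\<close> in auto)
  then show ?thesis
    by simp
qed

lemma Dt_iter_eq_on_closure:
  assumes "open \<Omega>" "bounded \<Omega>" and F: "real_analytic3_on U F" and G: "real_analytic3_on U G"
    and domain: "closure \<Omega> \<times> {-\<epsilon>..\<epsilon>} \<subseteq> U" and "0 < \<epsilon>"
    and pde: "solves_hessian_eq \<Omega> \<epsilon> F" "solves_hessian_eq \<Omega> \<epsilon> G"
    and hessian: "\<And>p. p \<in> \<Omega> \<Longrightarrow> Dx (Dx F) (p, 0) * Dy (Dy F) (p, 0) < (Dy (Dx F) (p, 0))\<^sup>2"
    and initial: "\<And>q. q \<in> closure \<Omega> \<Longrightarrow> F (q, 0) = G (q, 0)"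
    and boundary: "\<And>q t. q \<in> frontier \<Omega> \<Longrightarrow> t \<in> {-\<epsilon>..\<epsilon>} \<Longrightarrow> F (q, t) = G (q, t)"
    and "q \<in> closure \<Omega>"
  shows "(Dt ^^ m) F (q, 0) = (Dt ^^ m) G (q, 0)"
  using \<open>q \<in> closure \<Omega>\<close>
proof (induction m arbitrary: q rule: less_induct)
  case (less m)
  show ?case
  proof (cases "m = 0")
    case True
    with initial less.prems show ?thesis
      by simp
  next
    case False
    then have "0 < m"
      by simp
    have "\<Omega> \<times> {-\<epsilon>..\<epsilon>} \<subseteq> U"
      using domain closure_subset by fastforce
    show ?thesis
    proof (rule dirichlet_uniqueness_on_slice[OF assms(1,2) real_analytic3_on_Dt_iter[OF F]
          real_analytic3_on_Dt_iter[OF G] _ _ _ less.prems])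
      show "closure \<Omega> \<times> {0} \<subseteq> U"
        using domain \<open>0 < \<epsilon>\<close> by auto
      show "Lap ((Dt ^^ m) F) (p, 0) = Lap ((Dt ^^ m) G) (p, 0)" if "p \<in> \<Omega>" for p
        using F G assms(1) that \<open>0 < \<epsilon>\<close> \<open>\<Omega> \<times> {-\<epsilon>..\<epsilon>} \<subseteq> U\<close> pde hessian[OF that] \<open>0 < m\<close>
        by (rule Lap_Dt_iter_eq_at_initial_time) (use less.IH in \<open>blast intro: subsetD[OF closure_subset]\<close>)
      show "(Dt ^^ m) F (p, 0) = (Dt ^^ m) G (p, 0)" if "p \<in> frontier \<Omega>" for p
      proof -
        have "\<forall>\<^sub>F s in nhds 0. s \<in> {-\<epsilon><..<\<epsilon>}"
          using \<open>0 < \<epsilon>\<close> by (intro eventually_nhds_in_open) auto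
        then have "\<forall>\<^sub>F s in nhds 0. F (p, s) = G (p, s)"
          by (rule eventually_mono) (use boundary[OF that] in auto)
        then show ?thesis
          unfolding Dt_iter_eq_higher_deriv by (simp add: higher_deriv_cong_ev)
      qed
    qed
  qed
qed

theorem corollary3:
  fixes \<Omega> :: "(real \<times> real) set"
    and f0 :: "real \<times> real \<Rightarrow> real"
    and \<epsilon> :: real
    and f g :: "(real \<times> real) \<times> real \<Rightarrow> real"
  assumes "jordan_domain_analytic \<Omega>"
    and "analytic_on_closed2 (closure \<Omega>) f0"
    and "\<forall>p\<in>\<Omega>. dxx f0 p + dyy f0 p = 0"
    and "\<forall>p\<in>closure \<Omega>. dxx f0 p * dyy f0 p - (dxy f0 p)\<^sup>2 \<noteq> 0"
    and "\<epsilon> > 0"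
    and "analytic_on_closed3 (closure \<Omega> \<times> {-\<epsilon>..\<epsilon>}) f"
    and "\<forall>p\<in>closure \<Omega>. \<forall>t\<in>{-\<epsilon>..\<epsilon>}.
           dxx (\<lambda>q. f (q, t)) p + dyy (\<lambda>q. f (q, t)) p =
           t * sqrt ((dxy (\<lambda>q. f (q, t)) p)\<^sup>2 - dxx (\<lambda>q. f (q, t)) p * dyy (\<lambda>q. f (q, t)) p)"
    and "\<forall>p\<in>closure \<Omega>. f (p, 0) = f0 p"
    and "\<forall>p\<in>frontier \<Omega>. \<forall>t\<in>{-\<epsilon>..\<epsilon>}. f (p, t) = f0 p"
    and "analytic_on_closed3 (closure \<Omega> \<times> {-\<epsilon>..\<epsilon>}) g"
    and "\<forall>p\<in>closure \<Omega>. \<forall>t\<in>{-\<epsilon>..\<epsilon>}.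
           dxx (\<lambda>q. g (q, t)) p + dyy (\<lambda>q. g (q, t)) p =
           t * sqrt ((dxy (\<lambda>q. g (q, t)) p)\<^sup>2 - dxx (\<lambda>q. g (q, t)) p * dyy (\<lambda>q. g (q, t)) p)"
    and "\<forall>p\<in>closure \<Omega>. g (p, 0) = f0 p"
    and "\<forall>p\<in>frontier \<Omega>. \<forall>t\<in>{-\<epsilon>..\<epsilon>}. g (p, t) = f0 p"
  shows "\<forall>p\<in>closure \<Omega>. \<forall>t\<in>{-\<epsilon>..\<epsilon>}. f (p, t) = g (p, t)"
proof -
  note \<Omega> = jordan_domain_analytic_open_bounded[OF assms(1)]
  obtain Uf Ug where U: "closure \<Omega> \<times> {-\<epsilon>..\<epsilon>} \<subseteq> Uf \<inter> Ug"
    and f: "real_analytic3_on Uf f" and g: "real_analytic3_on Ug g"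
    using assms(6,10) unfolding analytic_on_closed3_def by blast
  have "open (Uf \<inter> Ug)"
    using f g by (simp add: real_analytic3_on_iff open_Int)
  then have "real_analytic3_on (Uf \<inter> Ug) f" "real_analytic3_on (Uf \<inter> Ug) g"
    using f g by (blast intro: real_analytic3_on_subset)+
  moreover have "solves_hessian_eq \<Omega> \<epsilon> f" "solves_hessian_eq \<Omega> \<epsilon> g"
    using assms(7,11) closure_subset unfolding solves_hessian_eq_def by blast+
  moreover have "Dx (Dx f) (p, 0) * Dy (Dy f) (p, 0) < (Dy (Dx f) (p, 0))\<^sup>2" if "p \<in> \<Omega>" for p
    using \<Omega>(1) that assms(3,4,8)
    by (intro hessian_condition_at_initial_time[where u = f0]) (auto dest: subsetD[OF closure_subset])
  ultimately have "(Dt ^^ k) f (p, 0) = (Dt ^^ k) g (p, 0)" if "p \<in> closure \<Omega>" for p k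
    using \<Omega> U assms(5,8,9,12,13) that by (intro Dt_iter_eq_on_closure) auto
  then show ?thesis
    using \<open>real_analytic3_on (Uf \<inter> Ug) f\<close> \<open>real_analytic3_on (Uf \<inter> Ug) g\<close> U
    by (blast intro: real_analytic3_on_eq_on_t_segment)
qed

end
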